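(* Assume the setting described in the context and let $\Theta\in C([0,\infty),\mathbb{R}^{\mathfrak{d}})$ satisfy $\Theta_t=\Theta_0-\int_0^t\mathcal{G}(\Theta_s)\,\mathrm{d}s$ for all $t\in[0,\infty)$. Then $$\limsup_{t\to\infty}\mathcal{L}(\Theta_t)\le\inf_{\xi\in\mathbb{R}}\Big[\int_{[\mathscr{a},\mathscr{b}]^d}(f(x)-\xi)^2\,\mu(\mathrm{d}x)\Big].$$
   Context: Setting: $d,H,\mathfrak{d}\in\mathbb{N}$ with $\mathfrak{d}=dH+2H+1$, $\mathscr{a}\in\mathbb{R}$, $\mathscr{b}\in(\mathscr{a},\infty)$, $f\in C([\mathscr{a},\mathscr{b}]^d,\mathbb{R})$. For $\theta=(\theta_1,\dots,\theta_{\mathfrak{d}})\in\mathbb{R}^{\mathfrak{d}}$, $i\in\{1,\dots,H\}$, $j\in\{1,\dots,d\}$ put $\mathfrak{w}^\theta_{i,j}=\theta_{(i-1)d+j}$, $\mathfrak{b}^\theta_i=\theta_{Hd+i}$, $\mathfrak{v}^\theta_i=\theta_{H(d+1)+i}$, $\mathfrak{c}^\theta=\theta_{\mathfrak{d}}$. Let $\mathfrak{R}_r\in C^1(\mathbb{R},\mathbb{R})$, $r\in\mathbb{N}$, satisfy for all $x\in\mathbb{R}$ that $\lim_{r\to\infty}\big(|\mathfrak{R}_r(x)-\max\{x,0\}|+|(\mathfrak{R}_r)'(x)-\mathbb{1}_{(0,\infty)}(x)|\big)=0$ and $\sup_{r\in\mathbb{N}}\sup_{y\in[-|x|,|x|]}|(\mathfrak{R}_r)'(y)|<\infty$.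 Let $\mu$ be a finite measure on $\mathcal{B}([\mathscr{a},\mathscr{b}]^d)$. For $\theta\in\mathbb{R}^{\mathfrak{d}}$, $x\in\mathbb{R}^d$ let $\mathscr{N}^\theta(x)=\mathfrak{c}^\theta+\sum_{i=1}^H\mathfrak{v}^\theta_i\max\{\mathfrak{b}^\theta_i+\sum_{j=1}^d\mathfrak{w}^\theta_{i,j}x_j,0\}$, $\mathcal{L}(\theta)=\int_{[\mathscr{a},\mathscr{b}]^d}(f(y)-\mathscr{N}^\theta(y))^2\,\mu(\mathrm{d}y)$, and for $r\in\mathbb{N}$, $\mathfrak{L}_r(\theta)=\int_{[\mathscr{a},\mathscr{b}]^d}\big(f(y)-\mathfrak{c}^\theta-\sum_{i=1}^H\mathfrak{v}^\theta_i\,\mathfrak{R}_r(\mathfrak{b}^\theta_i+\sum_{j=1}^d\mathfrak{w}^\theta_{i,j}y_j)\big)^2\,\mu(\mathrm{d}y)$. Let $\mathcal{G}\colon\mathbb{R}^{\mathfrak{d}}\to\mathbb{R}^{\mathfrak{d}}$ satisfy $\mathcal{G}(\theta)=\lim_{r\to\infty}(\nabla\mathfrak{L}_r)(\theta)$ for every $\theta$ for which this limit exists ($\mathcal{G}$ is locally bounded and measurable). *)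

theory Defs
  imports "HOL-Analysis.Analysis"
begin

text \<open>Parameter space R^(dH+2H+1), identified with
  (real^'d)^'h  x  real^'h  x  real^'h  x  real
  (inner weights w_{i,j}, inner biases b_i, outer weights v_i, outer bias c).\<close>

type_synonym ('d,'h) param = "((real^'d)^'h) \<times> (real^'h) \<times> (real^'h) \<times> real"

definition wW :: "('d::finite,'h::finite) param \<Rightarrow> 'h \<Rightarrow> 'd \<Rightarrow> real" where
  "wW \<theta> i j = (fst \<theta>) $ i $ j"
definition bB :: "('d::finite,'h::finite) param \<Rightarrow> 'h \<Rightarrow> real" where
  "bB \<theta> i = (fst (snd \<theta>)) $ i"
definition vV :: "('d::finite,'h::finite) param \<Rightarrow> 'h \<Rightarrow> real" where
  "vV \<theta> i = (fst (snd (snd \<theta>))) $ i"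
definition cC :: "('d::finite,'h::finite) param \<Rightarrow> real" where
  "cC \<theta> = snd (snd (snd \<theta>))"

definition realis :: "(real \<Rightarrow> real) \<Rightarrow> ('d::finite,'h::finite) param \<Rightarrow> real^'d \<Rightarrow> real" where
  "realis act \<theta> x = cC \<theta> + (\<Sum>i\<in>UNIV. vV \<theta> i * act (bB \<theta> i + (\<Sum>j\<in>UNIV. wW \<theta> i j * x $ j)))"

definition relu :: "real \<Rightarrow> real" where "relu x = max x 0"

definition risk :: "(real^'d) measure \<Rightarrow> (real^'d \<Rightarrow> real) \<Rightarrow> (real \<Rightarrow> real)
    \<Rightarrow> ('d::finite,'h::finite) param \<Rightarrow> real" where
  "risk \<mu> f act \<theta> = (\<integral>y. (f y - realis act \<theta> y)\<^sup>2 \<partial>\<mu>)"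

definition cube :: "real \<Rightarrow> real \<Rightarrow> (real^'d::finite) set" where
  "cube a b = {x. \<forall>j. a \<le> x $ j \<and> x $ j \<le> b}"

definition grad :: "('a::real_inner \<Rightarrow> real) \<Rightarrow> 'a \<Rightarrow> 'a" where
  "grad F x = (THE g. (F has_derivative (\<lambda>h. g \<bullet> h)) (at x))"

end

theory Submission
  imports Defs
begin

(* For the smooth activations R r the risk is C^1, its gradient being the integral of the pointwise
   loss gradient, and by dominated convergence these gradients converge to the generalised gradient
   G of the ReLU risk L. The chain rule for the smoothed risks along the flow, in the limit r -> oo,
   gives the energy identity L (Theta t) = L (Theta 0) - int_0^t |G (Theta s)|^2 ds. As the network
   is affine in its outer parameters, L theta <= int (f - xi)^2 + (|theta| + |xi|) |G theta|.
   Finally int_0^oo |G (Theta s)|^2 ds <= L (Theta 0) forces |Theta t| = O(sqrt t), so if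
   (|Theta t| + |xi|) |G (Theta t)| stayed above eps, then |G (Theta t)|^2 would exceed a multiple
   of 1/(t + 1) and not be integrable. Hence it is small at some time, after which the
   nonincreasing L (Theta t) stays below int (f - xi)^2 + eps. *)

section \<open>Network realisations and their parameter gradients\<close>

definition neuron_input :: "('d::finite,'h::finite) param \<Rightarrow> 'h \<Rightarrow> real^'d \<Rightarrow> real" where
  "neuron_input \<theta> i y = bB \<theta> i + (\<Sum>j\<in>UNIV. wW \<theta> i j * y $ j)"

definition realis_grad :: "(real \<Rightarrow> real) \<Rightarrow> (real \<Rightarrow> real) \<Rightarrow> ('d::finite,'h::finite) param \<Rightarrow> real^'d
    \<Rightarrow> ('d,'h) param" where
  "realis_grad act act' \<theta> y =
     ((\<chi> i j. vV \<theta> i * act' (neuron_input \<theta> i y) * y $ j),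
      (\<chi> i. vV \<theta> i * act' (neuron_input \<theta> i y)),
      (\<chi> i. act (neuron_input \<theta> i y)), 1)"

definition loss_grad :: "(real^'d \<Rightarrow> real) \<Rightarrow> (real \<Rightarrow> real) \<Rightarrow> (real \<Rightarrow> real)
    \<Rightarrow> ('d::finite,'h::finite) param \<Rightarrow> real^'d \<Rightarrow> ('d,'h) param" where
  "loss_grad f act act' \<theta> y = (-2 * (f y - realis act \<theta> y)) *\<^sub>R realis_grad act act' \<theta> y"

definition risk_grad :: "(real^'d) measure \<Rightarrow> (real^'d \<Rightarrow> real) \<Rightarrow> (real \<Rightarrow> real) \<Rightarrow> (real \<Rightarrow> real)
    \<Rightarrow> ('d::finite,'h::finite) param \<Rightarrow> ('d,'h) param" where
  "risk_grad \<mu> f act act' \<theta> = (\<integral>y. loss_grad f act act' \<theta> y \<partial>\<mu>)"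

lemma realis_eq: "realis act \<theta> y = cC \<theta> + (\<Sum>i\<in>UNIV. vV \<theta> i * act (neuron_input \<theta> i y))"
  by (simp add: realis_def neuron_input_def)

lemma bounded_linear_param_coords:
  "bounded_linear (\<lambda>\<theta>. wW \<theta> i j)" "bounded_linear (\<lambda>\<theta>. bB \<theta> i)"
  "bounded_linear (\<lambda>\<theta>. vV \<theta> i)" "bounded_linear cC"
  unfolding wW_def bB_def vV_def cC_def[abs_def]
  by (rule bounded_linear_compose[OF bounded_linear_vec_nth] bounded_linear_compose[OF bounded_linear_fst]
      bounded_linear_compose[OF bounded_linear_snd] bounded_linear_fst bounded_linear_snd)+

lemma inner_realis_grad:
  "realis_grad act act' \<theta> y \<bullet> h = cC h + (\<Sum>i\<in>UNIV. vV h i * act (neuron_input \<theta> i y) +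
      vV \<theta> i * (act' (neuron_input \<theta> i y) * (bB h i + (\<Sum>j\<in>UNIV. wW h i j * y $ j))))"
  by (cases h rule: prod_cases4)
    (simp add: realis_grad_def inner_vec_def wW_def bB_def vV_def cC_def sum.distrib sum_distrib_left
      algebra_simps)

lemma has_derivative_realis:
  assumes act': "\<And>z. (act has_real_derivative act' z) (at z)"
  shows "((\<lambda>\<theta>. realis act \<theta> y) has_derivative (\<lambda>h. realis_grad act act' \<theta> y \<bullet> h)) (at \<theta>)"
proof -
  note coords = bounded_linear_param_coords[THEN bounded_linear_imp_has_derivative]
  have input: "((\<lambda>\<theta>. neuron_input \<theta> i y) has_derivative (\<lambda>h. bB h i + (\<Sum>j\<in>UNIV. wW h i j * y $ j))) (at \<theta>)"
    for i unfolding neuron_input_def by (intro has_derivative_add has_derivative_sum has_derivative_mult_left coords)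
  have activation: "((\<lambda>\<theta>. act (neuron_input \<theta> i y)) has_derivative
      (\<lambda>h. act' (neuron_input \<theta> i y) * (bB h i + (\<Sum>j\<in>UNIV. wW h i j * y $ j)))) (at \<theta>)" for i
    using has_derivative_compose[OF input act'[unfolded has_field_derivative_def]] by simp
  have outer: "((\<lambda>\<theta>. vV \<theta> i) has_derivative (\<lambda>h. vV h i)) (at \<theta>)" for i
    by (rule coords)
  show ?thesis
    unfolding realis_eq inner_realis_grad
    by (intro has_derivative_add coords has_derivative_sum has_derivative_mult[OF outer activation, THEN has_derivative_eq_rhs])
      (auto simp: algebra_simps)
qed

lemma has_derivative_squared_error:
  assumes "\<And>z. (act has_real_derivative act' z) (at z)"
  shows "((\<lambda>\<theta>. (f y - realis act \<theta> y)\<^sup>2) has_derivative (\<lambda>h. loss_grad f act act' \<theta> y \<bullet> h)) (at \<theta>)"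
  by (rule has_derivative_power[OF has_derivative_diff[OF has_derivative_const has_derivative_realis[OF assms]],
        THEN has_derivative_eq_rhs]) (simp add: loss_grad_def fun_eq_iff algebra_simps)

lemma grad_eqI:
  fixes F :: "'a::real_inner \<Rightarrow> real"
  assumes "(F has_derivative (\<lambda>h. g \<bullet> h)) (at x)"
  shows "grad F x = g"
  unfolding grad_def
proof (rule the_equality)
  fix g' assume "(F has_derivative (\<lambda>h. g' \<bullet> h)) (at x)"
  from has_derivative_unique[OF this assms] have "(g' - g) \<bullet> (g' - g) = 0"
    by (metis inner_diff_left diff_self)
  then show "g' = g" by simp
qed (rule assms)

lemma abs_param_coords_le_norm:
  fixes \<theta> :: "('d::finite,'h::finite) param"
  shows "\<bar>wW \<theta> i j\<bar> \<le> norm \<theta>" "\<bar>bB \<theta> i\<bar> \<le> norm \<theta>" "\<bar>vV \<theta> i\<bar> \<le> norm \<theta>" "\<bar>cC \<theta>\<bar> \<le> norm \<theta>"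
proof -
  obtain w b v c where \<theta>: "\<theta> = (w, b, v, c)" by (cases \<theta> rule: prod_cases4)
  have "norm w \<le> norm \<theta>" "norm b \<le> norm \<theta>" "norm v \<le> norm \<theta>" "norm c \<le> norm \<theta>"
    unfolding \<theta> by (meson norm_fst_le norm_snd_le order_trans)+
  then show "\<bar>wW \<theta> i j\<bar> \<le> norm \<theta>" "\<bar>bB \<theta> i\<bar> \<le> norm \<theta>" "\<bar>vV \<theta> i\<bar> \<le> norm \<theta>" "\<bar>cC \<theta>\<bar> \<le> norm \<theta>"
    unfolding wW_def bB_def vV_def cC_def \<theta>
    using component_le_norm_cart[of "w $ i" j] Finite_Cartesian_Product.norm_nth_le[of w i] component_le_norm_cart[of b i]
      component_le_norm_cart[of v i] by auto
qed

lemma norm_vec_le_card_mult: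
  fixes x :: "'a::real_normed_vector^'n::finite"
  assumes "\<And>i. norm (x $ i) \<le> B"
  shows "norm x \<le> real CARD('n) * B"
proof -
  have "norm x \<le> (\<Sum>i\<in>UNIV. norm (x $ i))"
    unfolding norm_vec_def by (rule L2_set_le_sum) simp
  also have "\<dots> \<le> (\<Sum>i\<in>(UNIV::'n set). B)" using assms by (intro sum_mono) auto
  finally show ?thesis by simp
qed

lemma abs_neuron_input_le:
  fixes \<theta> :: "('d::finite,'h::finite) param"
  assumes "norm \<theta> \<le> \<rho>" "\<And>j. \<bar>y $ j\<bar> \<le> Y"
  shows "\<bar>neuron_input \<theta> i y\<bar> \<le> \<rho> + real CARD('d) * (\<rho> * Y)"
proof -
  have "\<bar>neuron_input \<theta> i y\<bar> \<le> \<bar>bB \<theta> i\<bar> + (\<Sum>j\<in>UNIV. \<bar>wW \<theta> i j * y $ j\<bar>)"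
    unfolding neuron_input_def by (rule order_trans[OF abs_triangle_ineq add_left_mono[OF sum_abs]])
  also have "\<dots> \<le> \<rho> + (\<Sum>j\<in>(UNIV::'d set). \<rho> * Y)"
    using abs_param_coords_le_norm[of \<theta>] assms
    by (intro add_mono sum_mono) (auto simp: abs_mult intro!: mult_mono order_trans[OF _ assms(1)])
  finally show ?thesis by simp
qed

lemma abs_realis_le:
  fixes \<theta> :: "('d::finite,'h::finite) param"
  assumes "norm \<theta> \<le> \<rho>" "\<And>i. \<bar>act (neuron_input \<theta> i y)\<bar> \<le> C"
  shows "\<bar>realis act \<theta> y\<bar> \<le> \<rho> + real CARD('h) * (\<rho> * C)"
proof -
  have "\<bar>realis act \<theta> y\<bar> \<le> \<bar>cC \<theta>\<bar> + (\<Sum>i\<in>UNIV. \<bar>vV \<theta> i * act (neuron_input \<theta> i y)\<bar>)"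
    unfolding realis_eq by (rule order_trans[OF abs_triangle_ineq add_left_mono[OF sum_abs]])
  also have "\<dots> \<le> \<rho> + (\<Sum>i\<in>(UNIV::'h set). \<rho> * C)"
    using abs_param_coords_le_norm[of \<theta>] assms
    by (intro add_mono sum_mono) (auto simp: abs_mult intro!: mult_mono order_trans[OF _ assms(1)])
  finally show ?thesis by simp
qed

lemma norm_realis_grad_le:
  fixes \<theta> :: "('d::finite,'h::finite) param"
  assumes "norm \<theta> \<le> \<rho>" "\<And>j. \<bar>y $ j\<bar> \<le> Y"
    and "\<And>i. \<bar>act (neuron_input \<theta> i y)\<bar> \<le> C" "\<And>i. \<bar>act' (neuron_input \<theta> i y)\<bar> \<le> C"
  shows "norm (realis_grad act act' \<theta> y)
    \<le> real CARD('h) * (real CARD('d) * (\<rho> * C * Y)) + real CARD('h) * (\<rho> * C) + real CARD('h) * C + 1"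
proof -
  have "C \<ge> 0" "\<rho> \<ge> 0" using assms(1,3) by (meson abs_ge_zero norm_ge_zero order_trans)+
  moreover have "\<bar>vV \<theta> i\<bar> \<le> \<rho>" for i using abs_param_coords_le_norm[of \<theta>] assms(1) by (meson order_trans)
  ultimately have
    "norm (\<chi> i j. vV \<theta> i * act' (neuron_input \<theta> i y) * y $ j) \<le> real CARD('h) * (real CARD('d) * (\<rho> * C * Y))"
    "norm (\<chi> i. vV \<theta> i * act' (neuron_input \<theta> i y)) \<le> real CARD('h) * (\<rho> * C)"
    "norm (\<chi> i. act (neuron_input \<theta> i y)) \<le> real CARD('h) * C"
    by (intro norm_vec_le_card_mult; auto simp: abs_mult assms intro!: mult_mono)+
  moreover have "norm (realis_grad act act' \<theta> y) \<le> norm (\<chi> i j. vV \<theta> i * act' (neuron_input \<theta> i y) * y $ j) +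
      (norm (\<chi> i. vV \<theta> i * act' (neuron_input \<theta> i y)) + (norm (\<chi> i. act (neuron_input \<theta> i y)) + norm (1::real)))"
    unfolding realis_grad_def by (meson norm_Pair_le add_left_mono order_trans)
  ultimately show ?thesis by simp
qed

lemma loss_bounds:
  "\<exists>B. \<forall>(\<theta>::('d::finite,'h::finite) param) y act act'. norm \<theta> \<le> \<rho> \<longrightarrow> (\<forall>j. \<bar>y $ j\<bar> \<le> Y) \<longrightarrow>
    (\<forall>i. \<bar>act (neuron_input \<theta> i y)\<bar> \<le> C \<and> \<bar>act' (neuron_input \<theta> i y)\<bar> \<le> C) \<longrightarrow> \<bar>f y\<bar> \<le> F \<longrightarrow>
    norm (loss_grad f act act' \<theta> y) \<le> B \<and> (f y - realis act \<theta> y)\<^sup>2 \<le> B"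
proof -
  define E where "E = F + (\<rho> + real CARD('h) * (\<rho> * C))"
  define K where "K = real CARD('h) * (real CARD('d) * (\<rho> * C * Y)) + real CARD('h) * (\<rho> * C)
    + real CARD('h) * C + 1"
  have "norm (loss_grad f act act' \<theta> y) \<le> max (2 * E * K) (E\<^sup>2) \<and> (f y - realis act \<theta> y)\<^sup>2 \<le> max (2 * E * K) (E\<^sup>2)"
    if \<theta>: "norm \<theta> \<le> \<rho>" and Y: "\<forall>j. \<bar>y $ j\<bar> \<le> Y"
      and act: "\<forall>i. \<bar>act (neuron_input \<theta> i y)\<bar> \<le> C \<and> \<bar>act' (neuron_input \<theta> i y)\<bar> \<le> C"
      and "\<bar>f y\<bar> \<le> F"
    for \<theta> :: "('d,'h) param" and y act act'
  proof -
    have "\<bar>realis act \<theta> y\<bar> \<le> \<rho> + real CARD('h) * (\<rho> * C)"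
      using \<theta> act by (intro abs_realis_le) auto
    then have fit: "\<bar>f y - realis act \<theta> y\<bar> \<le> E" using \<open>\<bar>f y\<bar> \<le> F\<close> unfolding E_def by linarith
    have "norm (realis_grad act act' \<theta> y) \<le> K"
      unfolding K_def using \<theta> Y act by (intro norm_realis_grad_le) auto
    with fit have "norm (loss_grad f act act' \<theta> y) \<le> 2 * E * K"
      unfolding loss_grad_def norm_scaleR abs_mult by (simp add: mult.assoc mult_mono)
    moreover have "(f y - realis act \<theta> y)\<^sup>2 \<le> E\<^sup>2"
      using fit by (metis abs_ge_zero power2_abs power_mono)
    ultimately show ?thesis by (simp add: le_max_iff_disj)
  qed
  then show ?thesis by blast
qed

(* The network is affine in the outer parameters: pairing realis_grad with the directions
   (0, 0, v, c) and (0, 0, 0, 1) returns the realisation N and 1, so pairing the risk gradient with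
   them recovers the cross term in (f - xi)^2 = (f - N)^2 + 2 (f - N) (N - xi) + (N - xi)^2. *)
lemma risk_le_const_fit_plus_grad:
  fixes \<theta> :: "('d::finite,'h::finite) param"
  assumes int_grad: "integrable \<mu> (loss_grad f act act' \<theta>)"
    and int_risk: "integrable \<mu> (\<lambda>y. (f y - realis act \<theta> y)\<^sup>2)"
    and int_const: "integrable \<mu> (\<lambda>y. (f y - \<xi>)\<^sup>2)"
  shows "risk \<mu> f act \<theta> \<le> (\<integral>y. (f y - \<xi>)\<^sup>2 \<partial>\<mu>) + (norm \<theta> + \<bar>\<xi>\<bar>) * norm (risk_grad \<mu> f act act' \<theta>)"
proof -
  define N where "N y = realis act \<theta> y" for y
  obtain w b v c where \<theta>: "\<theta> = (w, b, v, c)" by (cases \<theta> rule: prod_cases4)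
  define outer :: "('d,'h) param" where "outer = (0, 0, v, c)"
  define const :: "('d,'h) param" where "const = (0, 0, 0, 1)"
  have "outer \<bullet> realis_grad act act' \<theta> y = N y" "const \<bullet> realis_grad act act' \<theta> y = 1" for y
    by (simp_all add: outer_def const_def realis_grad_def N_def realis_eq inner_vec_def \<theta> vV_def cC_def)
  then have outer_grad: "outer \<bullet> loss_grad f act act' \<theta> y = -2 * (f y - N y) * N y"
    and const_grad: "const \<bullet> loss_grad f act act' \<theta> y = -2 * (f y - N y)" for y
    by (simp_all add: loss_grad_def N_def)
  have "risk \<mu> f act \<theta> - outer \<bullet> risk_grad \<mu> f act act' \<theta> + \<xi> * (const \<bullet> risk_grad \<mu> f act act' \<theta>)
      = (\<integral>y. (f y - N y)\<^sup>2 - outer \<bullet> loss_grad f act act' \<theta> y + \<xi> * (const \<bullet> loss_grad f act act' \<theta> y) \<partial>\<mu>)"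
    using int_grad int_risk by (simp add: risk_def risk_grad_def N_def)
  also have "\<dots> \<le> (\<integral>y. (f y - \<xi>)\<^sup>2 \<partial>\<mu>)"
  proof (rule integral_mono)
    show "integrable \<mu> (\<lambda>y. (f y - N y)\<^sup>2 - outer \<bullet> loss_grad f act act' \<theta> y + \<xi> * (const \<bullet> loss_grad f act act' \<theta> y))"
      using int_grad int_risk by (simp add: N_def)
    show "(f y - N y)\<^sup>2 - outer \<bullet> loss_grad f act act' \<theta> y + \<xi> * (const \<bullet> loss_grad f act act' \<theta> y) \<le> (f y - \<xi>)\<^sup>2" for y
      using zero_le_power2[of "N y - \<xi>"] unfolding outer_grad const_grad
      by (simp add: power2_eq_square algebra_simps)
  qed (rule int_const)
  finally have "risk \<mu> f act \<theta> \<le> (\<integral>y. (f y - \<xi>)\<^sup>2 \<partial>\<mu>) + outer \<bullet> risk_grad \<mu> f act act' \<theta>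
      - \<xi> * (const \<bullet> risk_grad \<mu> f act act' \<theta>)" by simp
  moreover have "norm outer \<le> norm \<theta>"
    unfolding outer_def \<theta> by (simp add: norm_Pair)
  then have "outer \<bullet> risk_grad \<mu> f act act' \<theta> \<le> norm \<theta> * norm (risk_grad \<mu> f act act' \<theta>)"
    by (meson Cauchy_Schwarz_ineq2 abs_le_D1 mult_right_mono norm_ge_zero order_trans)
  moreover have "\<bar>const \<bullet> risk_grad \<mu> f act act' \<theta>\<bar> \<le> norm (risk_grad \<mu> f act act' \<theta>)"
    using Cauchy_Schwarz_ineq2[of const] by (simp add: const_def norm_Pair)
  then have "- (\<xi> * (const \<bullet> risk_grad \<mu> f act act' \<theta>)) \<le> \<bar>\<xi>\<bar> * norm (risk_grad \<mu> f act act' \<theta>)"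
    using abs_ge_minus_self[of "\<xi> * (const \<bullet> risk_grad \<mu> f act act' \<theta>)"]
    by (simp add: abs_mult) (meson abs_ge_zero mult_left_mono order_trans)
  ultimately show ?thesis by (simp add: algebra_simps)
qed

section \<open>Integrals depending on a parameter\<close>

lemma onorm_inner_diff_le:
  fixes a b :: "'a::real_inner"
  shows "onorm ((\<lambda>h. a \<bullet> h) - (\<lambda>h. b \<bullet> h)) \<le> norm (a - b)"
proof -
  have "(\<lambda>h. a \<bullet> h) - (\<lambda>h. b \<bullet> h) = (\<lambda>h. (a - b) \<bullet> h)" by (auto simp: fun_eq_iff inner_diff_left)
  moreover have "onorm (\<lambda>h. (a - b) \<bullet> h) \<le> norm (a - b) * onorm (\<lambda>h::'a. h)"
    by (rule onorm_inner_right[OF bounded_linear_ident])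
  moreover have "norm (a - b) * onorm (\<lambda>h::'a. h) \<le> norm (a - b)"
    using onorm_id_le[where 'a='a] by (simp add: mult_left_le)
  ultimately show ?thesis by simp
qed

context finite_measure
begin

lemma norm_integral_le_measure_mult:
  fixes f :: "'a \<Rightarrow> 'b::{banach,second_countable_topology}"
  assumes "integrable M f" "\<And>x. x \<in> space M \<Longrightarrow> norm (f x) \<le> B"
  shows "norm (\<integral>x. f x \<partial>M) \<le> measure M (space M) * B"
proof -
  have "norm (\<integral>x. f x \<partial>M) \<le> (\<integral>x. norm (f x) \<partial>M)" by (rule integral_norm_bound)
  also have "\<dots> \<le> (\<integral>x. B \<partial>M)" using assms by (intro integral_mono) auto
  finally show ?thesis by simp
qed


lemma has_derivative_integral_uniform:
  fixes F :: "'p::euclidean_space \<Rightarrow> 'a \<Rightarrow> real" and F' :: "'p \<Rightarrow> 'a \<Rightarrow> 'p"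
  assumes der: "\<And>\<theta> y. y \<in> space M \<Longrightarrow> ((\<lambda>\<theta>. F \<theta> y) has_derivative (\<lambda>h. F' \<theta> y \<bullet> h)) (at \<theta>)"
    and int: "\<And>\<theta>. integrable M (F \<theta>)" "\<And>\<theta>. integrable M (F' \<theta>)"
    and unif: "\<And>\<epsilon>. \<epsilon> > 0 \<Longrightarrow> \<exists>\<delta>>0. \<forall>\<theta>. dist \<theta> \<theta>0 < \<delta> \<longrightarrow> (\<forall>y\<in>space M. dist (F' \<theta> y) (F' \<theta>0 y) \<le> \<epsilon>)"
  shows "((\<lambda>\<theta>. \<integral>y. F \<theta> y \<partial>M) has_derivative (\<lambda>h. (\<integral>y. F' \<theta>0 y \<partial>M) \<bullet> h)) (at \<theta>0)"
  unfolding has_derivative_at_alt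
proof (intro conjI allI impI bounded_linear_inner_right)
  fix e :: real assume "e > 0"
  define m where "m = measure M (space M)"
  have m_nonneg: "m \<ge> 0" by (simp add: m_def)
  have "e / (m + 1) > 0" using \<open>e > 0\<close> by (simp add: m_def add_nonneg_pos)
  then obtain \<delta> where "\<delta> > 0"
    and \<delta>: "\<And>\<theta> y. norm (\<theta> - \<theta>0) < \<delta> \<Longrightarrow> y \<in> space M \<Longrightarrow> norm (F' \<theta> y - F' \<theta>0 y) \<le> e / (m + 1)"
    using unif[unfolded dist_norm] by blast
  have "norm ((\<integral>y. F \<theta> y \<partial>M) - (\<integral>y. F \<theta>0 y \<partial>M) - (\<integral>y. F' \<theta>0 y \<partial>M) \<bullet> (\<theta> - \<theta>0))
      \<le> e * norm (\<theta> - \<theta>0)" if \<theta>: "norm (\<theta> - \<theta>0) < \<delta>" for \<theta>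
  proof -
    have pointwise: "norm (F \<theta> y - F \<theta>0 y - F' \<theta>0 y \<bullet> (\<theta> - \<theta>0)) \<le> norm (\<theta> - \<theta>0) * (e / (m + 1))"
      if y: "y \<in> space M" for y
    proof (rule differentiable_bound_linearization[where S="ball \<theta>0 \<delta>" and f'="\<lambda>\<theta> h. F' \<theta> y \<bullet> h"])
      show "\<theta>0 + t *\<^sub>R (\<theta> - \<theta>0) \<in> ball \<theta>0 \<delta>" if "t \<in> {0..1}" for t
        using \<theta> that mult_left_le_one_le[of "norm (\<theta> - \<theta>0)" "\<bar>t\<bar>"] by (auto simp: dist_norm)
      show "((\<lambda>\<theta>. F \<theta> y) has_derivative (\<lambda>h. F' x y \<bullet> h)) (at x within ball \<theta>0 \<delta>)" for x
        using der[OF y] by (rule has_derivative_at_withinI)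
      show "onorm ((\<lambda>h. F' x y \<bullet> h) - (\<lambda>h. F' \<theta>0 y \<bullet> h)) \<le> e / (m + 1)" if "x \<in> ball \<theta>0 \<delta>" for x
        using \<delta>[of x y] that y by (intro onorm_inner_diff_le[THEN order_trans]) (auto simp: dist_norm norm_minus_commute)
    qed (use \<open>\<delta> > 0\<close> in auto)
    have "norm ((\<integral>y. F \<theta> y \<partial>M) - (\<integral>y. F \<theta>0 y \<partial>M) - (\<integral>y. F' \<theta>0 y \<partial>M) \<bullet> (\<theta> - \<theta>0))
        = norm (\<integral>y. F \<theta> y - F \<theta>0 y - F' \<theta>0 y \<bullet> (\<theta> - \<theta>0) \<partial>M)"
      using int by simp
    also have "\<dots> \<le> m * (norm (\<theta> - \<theta>0) * (e / (m + 1)))"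
      unfolding m_def by (rule norm_integral_le_measure_mult) (use int pointwise in \<open>auto simp: m_def\<close>)
    also have "\<dots> = norm (\<theta> - \<theta>0) * (m * (e / (m + 1)))" by simp
    also have "\<dots> \<le> e * norm (\<theta> - \<theta>0)"
      using \<open>e > 0\<close> m_nonneg by (simp add: mult_left_mono field_simps)
    finally show ?thesis .
  qed
  then show "\<exists>d>0. \<forall>\<theta>. norm (\<theta> - \<theta>0) < d \<longrightarrow>
      norm ((\<integral>y. F \<theta> y \<partial>M) - (\<integral>y. F \<theta>0 y \<partial>M) - (\<integral>y. F' \<theta>0 y \<partial>M) \<bullet> (\<theta> - \<theta>0)) \<le> e * norm (\<theta> - \<theta>0)"
    using \<open>\<delta> > 0\<close> by blast
qed

lemma isCont_integral_uniform:
  fixes F :: "'p::metric_space \<Rightarrow> 'a \<Rightarrow> 'b::{banach,second_countable_topology}"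
  assumes int: "\<And>\<theta>. integrable M (F \<theta>)"
    and unif: "\<And>\<epsilon>. \<epsilon> > 0 \<Longrightarrow> \<exists>\<delta>>0. \<forall>\<theta>. dist \<theta> \<theta>0 < \<delta> \<longrightarrow> (\<forall>y\<in>space M. dist (F \<theta> y) (F \<theta>0 y) \<le> \<epsilon>)"
  shows "isCont (\<lambda>\<theta>. \<integral>y. F \<theta> y \<partial>M) \<theta>0"
  unfolding continuous_at_eps_delta
proof (intro allI impI)
  fix e :: real assume "e > 0"
  define m where "m = measure M (space M)"
  have m_nonneg: "m \<ge> 0" by (simp add: m_def)
  have "e / (m + 1) / 2 > 0" using \<open>e > 0\<close> by (simp add: m_def add_nonneg_pos)
  then obtain \<delta> where "\<delta> > 0"
    and \<delta>: "\<And>\<theta> y. dist \<theta> \<theta>0 < \<delta> \<Longrightarrow> y \<in> space M \<Longrightarrow> norm (F \<theta> y - F \<theta>0 y) \<le> e / (m + 1) / 2"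
    using unif[unfolded dist_norm] by blast
  have "dist (\<integral>y. F \<theta> y \<partial>M) (\<integral>y. F \<theta>0 y \<partial>M) < e" if "dist \<theta> \<theta>0 < \<delta>" for \<theta>
  proof -
    have "dist (\<integral>y. F \<theta> y \<partial>M) (\<integral>y. F \<theta>0 y \<partial>M) = norm (\<integral>y. F \<theta> y - F \<theta>0 y \<partial>M)"
      using int by (simp add: dist_norm)
    also have "\<dots> \<le> m * (e / (m + 1) / 2)"
      unfolding m_def by (rule norm_integral_le_measure_mult) (use int \<delta> that in \<open>auto simp: m_def\<close>)
    also have "\<dots> < e" using \<open>e > 0\<close> m_nonneg by (simp add: field_simps add_nonneg_pos)
    finally show ?thesis .
  qed
  then show "\<exists>d>0. \<forall>\<theta>. dist \<theta> \<theta>0 < d \<longrightarrow> dist (\<integral>y. F \<theta> y \<partial>M) (\<integral>y. F \<theta>0 y \<partial>M) < e"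
    using \<open>\<delta> > 0\<close> by blast
qed

end

lemma uniformly_continuous_in_parameter:
  fixes H :: "'p::euclidean_space \<times> 'y::metric_space \<Rightarrow> 'z::metric_space"
  assumes "continuous_on (UNIV \<times> S) H" "compact S" "\<epsilon> > 0"
  shows "\<exists>\<delta>>0. \<forall>\<theta>. dist \<theta> \<theta>0 < \<delta> \<longrightarrow> (\<forall>y\<in>S. dist (H (\<theta>, y)) (H (\<theta>0, y)) \<le> \<epsilon>)"
proof -
  have "uniformly_continuous_on (cball \<theta>0 1 \<times> S) H"
    by (intro compact_uniformly_continuous compact_Times compact_cball assms(2)
        continuous_on_subset[OF assms(1)]) auto
  then obtain d where "d > 0" and d: "\<And>x x'. x \<in> cball \<theta>0 1 \<times> S \<Longrightarrow> x' \<in> cball \<theta>0 1 \<times> S \<Longrightarrow>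
      dist x' x < d \<Longrightarrow> dist (H x') (H x) < \<epsilon>"
    unfolding uniformly_continuous_on_def using assms(3) by metis
  have "dist (H (\<theta>, y)) (H (\<theta>0, y)) \<le> \<epsilon>" if "dist \<theta> \<theta>0 < min d 1" "y \<in> S" for \<theta> y
    using that by (intro less_imp_le d) (auto simp: dist_Pair_Pair dist_commute)
  then show ?thesis using \<open>d > 0\<close> by (intro exI[of _ "min d 1"]) auto
qed

lemma continuous_on_slice:
  assumes "continuous_on (UNIV \<times> S) (\<lambda>p. H (fst p) (snd p))"
  shows "continuous_on S (H \<theta>)"
  by (rule continuous_on_compose2[OF assms, where f="\<lambda>y. (\<theta>, y)", simplified])
    (auto intro!: continuous_intros)

lemma cube_eq_cbox: "cube a b = cbox (\<chi> _. a) (\<chi> _. b :: real^'d::finite)"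
  unfolding cube_def interval_cbox_cart[symmetric] by (auto simp: less_eq_vec_def)

lemma compact_cube: "compact (cube a b :: (real^'d::finite) set)"
  unfolding cube_eq_cbox by (rule compact_cbox)

lemma abs_component_le_cube:
  assumes "y \<in> cube a b" shows "\<bar>y $ j\<bar> \<le> \<bar>a\<bar> + \<bar>b\<bar>"
proof -
  have "a \<le> y $ j" "y $ j \<le> b" using assms by (auto simp: cube_def)
  then show ?thesis by linarith
qed

lemma set_integrable_Icc_bounded:
  fixes h :: "real \<Rightarrow> 'b::{banach,second_countable_topology}"
  assumes "h \<in> borel_measurable borel" "\<And>s. s \<in> {0..t} \<Longrightarrow> norm (h s) \<le> B"
  shows "set_integrable lborel {0..t} h"
  unfolding set_integrable_def
  by (rule integrableI_bounded_set_indicator[where B=B]) (use assms in \<open>auto simp: emeasure_lborel_Icc_eq\<close>)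

lemma set_integrable_Icc_locally_bounded:
  fixes h :: "real \<Rightarrow> 'b::{banach,second_countable_topology}"
  assumes "h \<in> borel_measurable borel" "\<And>T. \<exists>B. \<forall>s\<in>{0..T}. norm (h s) \<le> B"
  shows "set_integrable lborel {0..t} h"
proof -
  obtain B where "\<And>s. s \<in> {0..t} \<Longrightarrow> norm (h s) \<le> B" using assms(2) by blast
  then show ?thesis by (rule set_integrable_Icc_bounded[OF assms(1)])
qed

lemma locally_bounded_norm_power2:
  fixes g :: "real \<Rightarrow> 'p::real_normed_vector"
  assumes "\<And>T. \<exists>B. \<forall>s\<in>{0..T}. norm (g s) \<le> B"
  shows "\<exists>B. \<forall>s\<in>{0..T}. norm ((norm (g s))\<^sup>2) \<le> B"
proof -
  obtain B where "\<forall>s\<in>{0..T}. norm (g s) \<le> B" using assms by blast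
  then show ?thesis by (intro exI[of _ "B\<^sup>2"]) (auto intro: power_mono)
qed

lemma locally_bounded_inner_continuous:
  fixes v g :: "real \<Rightarrow> 'p::real_inner"
  assumes "continuous_on UNIV v" "\<And>T. \<exists>B. \<forall>s\<in>{0..T}. norm (g s) \<le> B"
  shows "\<exists>B. \<forall>s\<in>{0..T}. norm (v s \<bullet> g s) \<le> B"
proof -
  obtain B where B: "\<forall>s\<in>{0..T}. norm (g s) \<le> B" using assms(2) by blast
  have "compact (v ` {0..T})" by (intro compact_continuous_image continuous_on_subset[OF assms(1)]) auto
  then obtain C where C: "\<forall>x\<in>v ` {0..T}. norm x \<le> C" using compact_imp_bounded bounded_iff by metis
  have "norm (v s \<bullet> g s) \<le> C * B" if "s \<in> {0..T}" for s
  proof -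
    have "norm (v s \<bullet> g s) \<le> norm (v s) * norm (g s)" by (simp add: Cauchy_Schwarz_ineq2)
    also have "\<dots> \<le> C * B" using B C that by (intro mult_mono) (auto intro: order_trans[OF norm_ge_zero])
    finally show ?thesis .
  qed
  then show ?thesis by blast
qed

lemma tendsto_set_integral_Icc_bounded:
  fixes u :: "nat \<Rightarrow> real \<Rightarrow> real"
  assumes u_meas: "\<And>r. u r \<in> borel_measurable borel" and v_meas: "v \<in> borel_measurable borel"
    and lim: "\<And>s. s \<in> {0..t} \<Longrightarrow> (\<lambda>r. u r s) \<longlonglongrightarrow> v s"
    and bdd: "\<And>r s. s \<in> {0..t} \<Longrightarrow> \<bar>u r s\<bar> \<le> B"
  shows "(\<lambda>r. \<integral>s\<in>{0..t}. u r s \<partial>lborel) \<longlonglongrightarrow> (\<integral>s\<in>{0..t}. v s \<partial>lborel)"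
  unfolding set_lebesgue_integral_def
proof (rule integral_dominated_convergence[where w="\<lambda>s. indicator {0..t} s * B"])
  show "integrable lborel (\<lambda>s. indicator {0..t} s * B)"
    using set_integrable_Icc_bounded[of "\<lambda>_. B" t "\<bar>B\<bar>"] by (simp add: set_integrable_def)
  show "AE s in lborel. (\<lambda>r. indicator {0..t} s *\<^sub>R u r s) \<longlonglongrightarrow> indicator {0..t} s *\<^sub>R v s"
    using lim by (intro AE_I2) (auto simp: indicator_def)
  show "AE s in lborel. norm (indicator {0..t} s *\<^sub>R u r s) \<le> indicator {0..t} s * B" for r
    using bdd by (intro AE_I2) (auto simp: indicator_def)
qed (use u_meas v_meas in auto)

section \<open>Integral curves\<close>

lemma inner_derivative_linearization:
  fixes F :: "'p::euclidean_space \<Rightarrow> real"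
  assumes der: "\<And>x. (F has_derivative (\<lambda>h. DF x \<bullet> h)) (at x)"
    and cont: "isCont DF x0" and "\<epsilon> > 0"
  obtains r where "r > 0" "\<And>x. x \<in> ball x0 r \<Longrightarrow> norm (DF x - DF x0) \<le> \<epsilon>"
    "\<And>x y. x \<in> ball x0 r \<Longrightarrow> y \<in> ball x0 r \<Longrightarrow> \<bar>F y - F x - DF x0 \<bullet> (y - x)\<bar> \<le> \<epsilon> * norm (y - x)"
proof -
  obtain r where "r > 0" and r: "\<And>x. dist x x0 < r \<Longrightarrow> dist (DF x) (DF x0) < \<epsilon>"
    using cont \<open>\<epsilon> > 0\<close> unfolding continuous_at_eps_delta by metis
  then have near: "norm (DF x - DF x0) \<le> \<epsilon>" if "x \<in> ball x0 r" for x
    using r[of x] that by (simp add: dist_commute dist_norm norm_minus_commute)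
  have "\<bar>F y - F x - DF x0 \<bullet> (y - x)\<bar> \<le> \<epsilon> * norm (y - x)" if "x \<in> ball x0 r" "y \<in> ball x0 r" for x y
  proof -
    have "norm (F y - F x - DF x0 \<bullet> (y - x)) \<le> norm (y - x) * \<epsilon>"
    proof (rule differentiable_bound_linearization[where S="ball x0 r" and f'="\<lambda>x h. DF x \<bullet> h"])
      show "x + t *\<^sub>R (y - x) \<in> ball x0 r" if "t \<in> {0..1}" for t
        using convex_ball[of x0 r] \<open>x \<in> ball x0 r\<close> \<open>y \<in> ball x0 r\<close> that
        by (simp add: convex_alt algebra_simps)
      show "(F has_derivative (\<lambda>h. DF z \<bullet> h)) (at z within ball x0 r)" for z
        by (rule has_derivative_at_withinI[OF der])
      show "onorm ((\<lambda>h. DF z \<bullet> h) - (\<lambda>h. DF x0 \<bullet> h)) \<le> \<epsilon>" if "z \<in> ball x0 r" for z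
        using onorm_inner_diff_le near[OF that] by (rule order_trans)
    qed (use \<open>r > 0\<close> in simp)
    then show ?thesis by (simp add: mult.commute)
  qed
  with \<open>r > 0\<close> near show ?thesis by (rule that)
qed

lemma integral_curve_diff:
  fixes g :: "real \<Rightarrow> 'p::euclidean_space"
  assumes "0 \<le> p" "p \<le> q" "g integrable_on {0..q}"
    and flow: "Th p = Th 0 - integral {0..p} g" "Th q = Th 0 - integral {0..q} g"
  shows "Th q - Th p = - integral {p..q} g"
proof -
  have "Th q - Th p = (Th 0 - integral {0..q} g) - (Th 0 - integral {0..p} g)"
    using flow by simp
  also have "\<dots> = - integral {p..q} g"
    by (simp add: Henstock_Kurzweil_Integration.integral_combine[OF assms(1-3), symmetric])
  finally show ?thesis .
qed

lemma integral_curve_increment: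
  fixes Th g :: "real \<Rightarrow> 'p::euclidean_space"
  assumes "0 \<le> p" "p \<le> q"
    and g_int: "g integrable_on {0..q}" and h_int: "(\<lambda>u. DF (Th u) \<bullet> g u) integrable_on {0..q}"
    and flow: "Th p = Th 0 - integral {0..p} g" "Th q = Th 0 - integral {0..q} g"
  shows "(F (Th q) + integral {0..q} (\<lambda>u. DF (Th u) \<bullet> g u)) - (F (Th p) + integral {0..p} (\<lambda>u. DF (Th u) \<bullet> g u))
    = (F (Th q) - F (Th p) - c \<bullet> (Th q - Th p)) + integral {p..q} (\<lambda>u. (DF (Th u) - c) \<bullet> g u)"
proof -
  have g_pq: "g integrable_on {p..q}" and h_pq: "(\<lambda>u. DF (Th u) \<bullet> g u) integrable_on {p..q}"
    using assms by (auto intro: integrable_subinterval_real[OF g_int] integrable_subinterval_real[OF h_int])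
  have "Th q - Th p = - integral {p..q} g"
    using assms(1,2) g_int flow by (rule integral_curve_diff)
  then have "c \<bullet> (Th q - Th p) = - integral {p..q} (\<lambda>u. c \<bullet> g u)"
    using integral_linear[OF g_pq bounded_linear_inner_right[of c]] by (simp add: o_def)
  moreover have "integral {0..q} (\<lambda>u. DF (Th u) \<bullet> g u) - integral {0..p} (\<lambda>u. DF (Th u) \<bullet> g u)
      = integral {p..q} (\<lambda>u. DF (Th u) \<bullet> g u)"
    using Henstock_Kurzweil_Integration.integral_combine[OF assms(1,2) h_int] by (simp add: algebra_simps)
  moreover have "integral {p..q} (\<lambda>u. (DF (Th u) - c) \<bullet> g u)
      = integral {p..q} (\<lambda>u. DF (Th u) \<bullet> g u) - integral {p..q} (\<lambda>u. c \<bullet> g u)"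
    using integral_diff[OF h_pq integrable_linear[OF g_pq bounded_linear_inner_right[of c], unfolded o_def]]
    by (simp add: inner_diff_left)
  ultimately show ?thesis by (simp add: algebra_simps)
qed

lemma integral_curve_increment_le:
  fixes F :: "'p::euclidean_space \<Rightarrow> real" and DF :: "'p \<Rightarrow> 'p" and Th g :: "real \<Rightarrow> 'p"
  defines "\<psi> \<equiv> \<lambda>t. F (Th t) + integral {0..t} (\<lambda>u. DF (Th u) \<bullet> g u)"
  assumes "0 \<le> p" "p \<le> q"
    and g_int: "g integrable_on {0..q}" and h_int: "(\<lambda>u. DF (Th u) \<bullet> g u) integrable_on {0..q}"
    and flow: "Th p = Th 0 - integral {0..p} g" "Th q = Th 0 - integral {0..q} g"
    and lin: "\<bar>F (Th q) - F (Th p) - c \<bullet> (Th q - Th p)\<bar> \<le> \<epsilon> * norm (Th q - Th p)"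
    and DF_near: "\<And>u. u \<in> {p..q} \<Longrightarrow> norm (DF (Th u) - c) \<le> \<epsilon>"
    and g_le: "\<And>u. u \<in> {p..q} \<Longrightarrow> norm (g u) \<le> B"
  shows "\<bar>\<psi> q - \<psi> p\<bar> \<le> 2 * \<epsilon> * B * (q - p)"
proof -
  have "\<epsilon> \<ge> 0" using DF_near[of p] \<open>p \<le> q\<close> by (auto intro: order_trans[OF norm_ge_zero])
  have g_pq: "g integrable_on {p..q}" using integrable_subinterval_real[OF g_int] \<open>0 \<le> p\<close> by simp
  have "norm (Th q - Th p) = norm (integral {p..q} g)"
    by (simp add: integral_curve_diff[OF \<open>0 \<le> p\<close> \<open>p \<le> q\<close> g_int flow])
  also have "\<dots> \<le> B * (q - p)"
    using Henstock_Kurzweil_Integration.integral_norm_bound_integral[OF g_pq integrable_const_ivl[of B]] g_le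
      \<open>p \<le> q\<close> by (simp add: mult.commute)
  finally have lin_bound: "\<bar>F (Th q) - F (Th p) - c \<bullet> (Th q - Th p)\<bar> \<le> \<epsilon> * (B * (q - p))"
    using lin \<open>\<epsilon> \<ge> 0\<close> by (meson mult_left_mono order_trans)
  have "\<bar>integral {p..q} (\<lambda>u. (DF (Th u) - c) \<bullet> g u)\<bar> \<le> integral {p..q} (\<lambda>_. \<epsilon> * B)"
  proof (rule Henstock_Kurzweil_Integration.integral_norm_bound_integral[where f="\<lambda>u. (DF (Th u) - c) \<bullet> g u", simplified])
    show "(\<lambda>u. (DF (Th u) - c) \<bullet> g u) integrable_on {p..q}"
      using integrable_diff[OF integrable_subinterval_real[OF h_int]
          integrable_linear[OF g_pq bounded_linear_inner_right[of c]]] \<open>0 \<le> p\<close>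
      by (simp add: o_def inner_diff_left)
    show "\<bar>(DF (Th u) - c) \<bullet> g u\<bar> \<le> \<epsilon> * B" if "u \<in> {p..q}" for u
      using Cauchy_Schwarz_ineq2[of "DF (Th u) - c" "g u"] DF_near[OF that] g_le[OF that]
      by (smt (verit) mult_mono norm_ge_zero)
  qed (rule integrable_const_ivl)
  then have "\<bar>\<psi> q - \<psi> p\<bar> \<le> \<epsilon> * (B * (q - p)) + \<epsilon> * (B * (q - p))"
    unfolding \<psi>_def integral_curve_increment[OF \<open>0 \<le> p\<close> \<open>p \<le> q\<close> g_int h_int flow, of F c]
    using lin_bound \<open>p \<le> q\<close> by (intro abs_triangle_ineq[THEN order_trans] add_mono) (simp_all add: ac_simps)
  then show ?thesis by (simp add: algebra_simps)
qed

lemma has_derivative_zero_within_Ici: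
  fixes \<psi> :: "real \<Rightarrow> real"
  assumes "t0 \<ge> 0"
    and flat: "\<And>e. e > 0 \<Longrightarrow> \<exists>d>0. \<forall>p q. 0 \<le> p \<longrightarrow> p \<le> q \<longrightarrow> \<bar>p - t0\<bar> < d \<longrightarrow> \<bar>q - t0\<bar> < d \<longrightarrow>
      \<bar>\<psi> q - \<psi> p\<bar> \<le> e * (q - p)"
  shows "(\<psi> has_derivative (\<lambda>_. 0)) (at t0 within {0..})"
  unfolding has_derivative_within_alt
proof (intro conjI allI impI bounded_linear_zero)
  fix e :: real assume "e > 0"
  then obtain d where "d > 0" and d: "\<And>p q. 0 \<le> p \<Longrightarrow> p \<le> q \<Longrightarrow> \<bar>p - t0\<bar> < d \<Longrightarrow> \<bar>q - t0\<bar> < d \<Longrightarrow>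
      \<bar>\<psi> q - \<psi> p\<bar> \<le> e * (q - p)"
    using flat by blast
  have "\<bar>\<psi> s - \<psi> t0\<bar> \<le> e * \<bar>s - t0\<bar>" if "s \<ge> 0" "\<bar>s - t0\<bar> < d" for s
  proof (cases "t0 \<le> s")
    case True
    then show ?thesis using d[OF \<open>t0 \<ge> 0\<close> True] \<open>d > 0\<close> that by simp
  next
    case False
    then have "\<bar>\<psi> t0 - \<psi> s\<bar> \<le> e * (t0 - s)" using d[of s t0] \<open>d > 0\<close> that by (simp add: abs_minus_commute)
    then show ?thesis using False by (simp add: abs_minus_commute)
  qed
  then show "\<exists>d>0. \<forall>s\<in>{0..}. norm (s - t0) < d \<longrightarrow> norm (\<psi> s - \<psi> t0 - 0) \<le> e * norm (s - t0)"
    using \<open>d > 0\<close> by auto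
qed

(* Th need not be differentiable, as g is only integrable; instead of differentiating F o Th,
   F is linearised at Th t0 and the increment of Th is written as an integral of g. *)
lemma integral_curve_chain_rule_local:
  fixes F :: "'p::euclidean_space \<Rightarrow> real" and DF :: "'p \<Rightarrow> 'p" and Th g :: "real \<Rightarrow> 'p"
  defines "\<psi> \<equiv> \<lambda>t. F (Th t) + integral {0..t} (\<lambda>u. DF (Th u) \<bullet> g u)"
  assumes der: "\<And>x. (F has_derivative (\<lambda>h. DF x \<bullet> h)) (at x)"
    and DF_cont: "\<And>x. isCont DF x" and Th_cont: "continuous_on UNIV Th"
    and g_int: "\<And>t. g integrable_on {0..t}" and h_int: "\<And>t. (\<lambda>u. DF (Th u) \<bullet> g u) integrable_on {0..t}"
    and g_bdd: "\<And>T. \<exists>B. \<forall>s\<in>{0..T}. norm (g s) \<le> B"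
    and flow: "\<And>t. t \<ge> 0 \<Longrightarrow> Th t = Th 0 - integral {0..t} g"
    and "t0 \<ge> 0"
  shows "(\<psi> has_derivative (\<lambda>_. 0)) (at t0 within {0..})"
proof (rule has_derivative_zero_within_Ici[OF \<open>t0 \<ge> 0\<close>])
  fix e :: real assume "e > 0"
  obtain B where B: "\<And>s. s \<in> {0..t0 + 1} \<Longrightarrow> norm (g s) \<le> B" using g_bdd by blast
  then have "B \<ge> 0" using \<open>t0 \<ge> 0\<close> by (meson atLeastAtMost_iff norm_ge_zero order_trans less_add_one less_imp_le)
  define \<epsilon> where "\<epsilon> = e / (2 * (B + 1))"
  have "\<epsilon> > 0" "2 * \<epsilon> * B \<le> e"
    using \<open>e > 0\<close> \<open>B \<ge> 0\<close> by (auto simp: \<epsilon>_def field_simps)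
  obtain r where "r > 0" and DF_near: "\<And>x. x \<in> ball (Th t0) r \<Longrightarrow> norm (DF x - DF (Th t0)) \<le> \<epsilon>"
    and F_lin: "\<And>x y. x \<in> ball (Th t0) r \<Longrightarrow> y \<in> ball (Th t0) r \<Longrightarrow>
      \<bar>F y - F x - DF (Th t0) \<bullet> (y - x)\<bar> \<le> \<epsilon> * norm (y - x)"
    using inner_derivative_linearization[OF der DF_cont \<open>\<epsilon> > 0\<close>] by metis
  obtain d where "d > 0" and d: "\<And>s. dist s t0 < d \<Longrightarrow> dist (Th s) (Th t0) < r"
    using Th_cont \<open>r > 0\<close> unfolding continuous_on_iff by (metis UNIV_I)
  have "\<bar>\<psi> q - \<psi> p\<bar> \<le> e * (q - p)"
    if "0 \<le> p" "p \<le> q" "\<bar>p - t0\<bar> < min d 1" "\<bar>q - t0\<bar> < min d 1" for p q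
  proof -
    have near: "Th u \<in> ball (Th t0) r" "norm (g u) \<le> B" if "u \<in> {p..q}" for u
    proof -
      have "\<bar>u - t0\<bar> < min d 1" using that \<open>\<bar>p - t0\<bar> < _\<close> \<open>\<bar>q - t0\<bar> < _\<close> by auto
      then have "dist u t0 < d" "u \<in> {0..t0 + 1}" using that \<open>0 \<le> p\<close> by (auto simp: dist_real_def)
      then have "dist (Th u) (Th t0) < r" "norm (g u) \<le> B" using d B by blast+
      then show "Th u \<in> ball (Th t0) r" "norm (g u) \<le> B" by (simp_all add: dist_commute)
    qed
    have "\<bar>\<psi> q - \<psi> p\<bar> \<le> 2 * \<epsilon> * B * (q - p)"
      unfolding \<psi>_def using \<open>0 \<le> p\<close> \<open>p \<le> q\<close>
      by (intro integral_curve_increment_le[where c="DF (Th t0)"] g_int h_int flow F_lin DF_near near) auto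
    also have "\<dots> \<le> e * (q - p)" using \<open>2 * \<epsilon> * B \<le> e\<close> \<open>p \<le> q\<close> by (intro mult_right_mono) auto
    finally show ?thesis .
  qed
  then show "\<exists>d>0. \<forall>p q. 0 \<le> p \<longrightarrow> p \<le> q \<longrightarrow> \<bar>p - t0\<bar> < d \<longrightarrow> \<bar>q - t0\<bar> < d \<longrightarrow>
      \<bar>\<psi> q - \<psi> p\<bar> \<le> e * (q - p)"
    using \<open>d > 0\<close> by (intro exI[of _ "min d 1"]) auto
qed

lemma integral_curve_chain_rule:
  fixes F :: "'p::euclidean_space \<Rightarrow> real" and Th g :: "real \<Rightarrow> 'p"
  assumes der: "\<And>x. (F has_derivative (\<lambda>h. DF x \<bullet> h)) (at x)"
    and DF_cont: "continuous_on UNIV DF" and Th_cont: "continuous_on UNIV Th"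
    and g_meas: "g \<in> borel_measurable borel" and g_bdd: "\<And>T. \<exists>B. \<forall>s\<in>{0..T}. norm (g s) \<le> B"
    and flow: "\<And>t. t \<ge> 0 \<Longrightarrow> Th t = Th 0 - (\<integral>s\<in>{0..t}. g s \<partial>lborel)"
    and "t \<ge> 0"
  shows "F (Th t) = F (Th 0) - (\<integral>s\<in>{0..t}. DF (Th s) \<bullet> g s \<partial>lborel)"
proof -
  have DF_Th_cont: "continuous_on UNIV (\<lambda>s. DF (Th s))"
    using continuous_on_compose2[OF DF_cont Th_cont] by simp
  have g_si: "set_integrable lborel {0..T} g" for T
    using g_meas g_bdd by (rule set_integrable_Icc_locally_bounded)
  have h_si: "set_integrable lborel {0..T} (\<lambda>s. DF (Th s) \<bullet> g s)" for T
    using borel_measurable_inner[OF borel_measurable_continuous_onI[OF DF_Th_cont] g_meas]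
      locally_bounded_inner_continuous[OF DF_Th_cont g_bdd]
    by (rule set_integrable_Icc_locally_bounded)
  note HK = set_borel_integral_eq_integral[OF g_si] set_borel_integral_eq_integral[OF h_si]
  define \<psi> where "\<psi> s = F (Th s) + integral {0..s} (\<lambda>u. DF (Th u) \<bullet> g u)" for s
  have flow_HK: "Th s = Th 0 - integral {0..s} g" if "s \<ge> 0" for s
    using flow[OF that] HK(2)[of s] by simp
  have "(\<psi> has_derivative (\<lambda>_. 0)) (at s within {0..})" if "s \<in> {0..}" for s
    unfolding \<psi>_def
    using integral_curve_chain_rule_local[OF der _ Th_cont HK(1) HK(3) g_bdd flow_HK] DF_cont that
    by (simp add: continuous_on_eq_continuous_at)
  then obtain c where "\<And>s. s \<in> {0..} \<Longrightarrow> \<psi> s = c"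
    using has_derivative_zero_constant[of "{0::real..}" \<psi>] by auto
  then have "\<psi> t = \<psi> 0" using \<open>t \<ge> 0\<close> by simp
  then show ?thesis using HK(4)[of t] by (simp add: \<psi>_def)
qed

section \<open>Smoothed ReLU risks\<close>

locale relu_smoothing = finite_measure \<mu> for \<mu> :: "(real^'d::finite) measure" +
  fixes a b :: real and f :: "real^'d \<Rightarrow> real" and R :: "nat \<Rightarrow> real \<Rightarrow> real"
  assumes f_cont: "continuous_on (cube a b) f"
    and R_diff: "\<forall>r\<ge>1. \<forall>x. R r differentiable (at x)"
    and R_C1: "\<forall>r\<ge>1. continuous_on UNIV (deriv (R r))"
    and R_lim: "\<forall>x. (\<lambda>r. \<bar>R r x - relu x\<bar> + \<bar>deriv (R r) x - indicator {0<..} x\<bar>) \<longlonglongrightarrow> 0"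
    and R_bd: "\<forall>x. \<exists>C. \<forall>r\<ge>1. \<forall>y\<in>{-\<bar>x\<bar>..\<bar>x\<bar>}. \<bar>deriv (R r) y\<bar> \<le> C"
    and mu_sets: "sets \<mu> = sets (restrict_space borel (cube a b))"
begin

abbreviation smooth_risk_grad :: "nat \<Rightarrow> ('d,'h::finite) param \<Rightarrow> ('d,'h) param" where
  "smooth_risk_grad r \<equiv> risk_grad \<mu> f (R r) (deriv (R r))"

(* The generalised gradient G of the statement, with ReLU' taken to be the indicator of (0, oo);
   grad_smooth_risk_tendsto identifies it as the limit of the smoothed gradients. *)
abbreviation relu_risk_grad :: "('d,'h::finite) param \<Rightarrow> ('d,'h) param" where
  "relu_risk_grad \<equiv> risk_grad \<mu> f relu (indicator {0<..})"

lemma space_eq_cube: "space \<mu> = cube a b"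
  using sets_eq_imp_space_eq[OF mu_sets] by (simp add: space_restrict_space)

lemma measurable_continuous_on_cube: "continuous_on (cube a b) g \<Longrightarrow> g \<in> borel_measurable \<mu>"
  by (subst measurable_cong_sets[OF mu_sets refl]) (rule borel_measurable_continuous_on_restrict)

lemma integrable_continuous_on_cube:
  fixes g :: "real^'d \<Rightarrow> 'b::{banach,second_countable_topology}"
  assumes "continuous_on (cube a b) g"
  shows "integrable \<mu> g"
proof -
  have "bounded (g ` cube a b)" by (intro compact_imp_bounded compact_continuous_image assms compact_cube)
  then obtain B where "\<forall>x\<in>g ` cube a b. norm x \<le> B" by (auto simp: bounded_iff)
  then show ?thesis
    by (intro integrable_const_bound[where B=B] measurable_continuous_on_cube assms) (auto simp: space_eq_cube)
qed

lemma has_real_derivative_R: "r \<ge> 1 \<Longrightarrow> (R r has_real_derivative deriv (R r) z) (at z)"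
  using R_diff DERIV_deriv_iff_real_differentiable by blast

lemma continuous_on_R: "r \<ge> 1 \<Longrightarrow> continuous_on UNIV (R r)"
  using R_diff by (meson differentiable_at_imp_differentiable_on differentiable_imp_continuous_on)

lemma R_tendsto: "(\<lambda>r. R r x) \<longlonglongrightarrow> relu x" "(\<lambda>r. deriv (R r) x) \<longlonglongrightarrow> indicator {0<..} x"
proof -
  have lim: "(\<lambda>r. \<bar>R r x - relu x\<bar> + \<bar>deriv (R r) x - indicator {0<..} x\<bar>) \<longlonglongrightarrow> 0" using R_lim by blast
  have "(\<lambda>r. R r x - relu x) \<longlonglongrightarrow> 0" "(\<lambda>r. deriv (R r) x - indicator {0<..} x) \<longlonglongrightarrow> 0"
    by (rule Lim_null_comparison[OF _ lim]; simp)+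
  then show "(\<lambda>r. R r x) \<longlonglongrightarrow> relu x" "(\<lambda>r. deriv (R r) x) \<longlonglongrightarrow> indicator {0<..} x"
    by (simp_all add: LIM_zero_iff)
qed

lemma R_bounded: "\<exists>C. \<forall>r\<ge>1. \<forall>z. \<bar>z\<bar> \<le> Z \<longrightarrow> \<bar>R r z\<bar> \<le> C \<and> \<bar>deriv (R r) z\<bar> \<le> C"
proof -
  obtain C where C: "\<And>r y. r \<ge> 1 \<Longrightarrow> y \<in> {-\<bar>Z\<bar>..\<bar>Z\<bar>} \<Longrightarrow> \<bar>deriv (R r) y\<bar> \<le> C"
    using R_bd by blast
  have "convergent (\<lambda>r. R r 0)" using R_tendsto(1) by (auto simp: convergent_def)
  then obtain A where A: "\<And>r. \<bar>R r 0\<bar> \<le> A" by (metis BseqE convergent_imp_Bseq real_norm_def)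
  have "\<bar>R r z\<bar> \<le> A + C * \<bar>Z\<bar>" if "r \<ge> 1" "\<bar>z\<bar> \<le> Z" for r z
  proof -
    have "norm (R r z - R r 0) \<le> C * norm (z - 0)"
    proof (rule field_differentiable_bound[where S="{-\<bar>Z\<bar>..\<bar>Z\<bar>}"])
      show "(R r has_field_derivative deriv (R r) x) (at x within {-\<bar>Z\<bar>..\<bar>Z\<bar>})" for x
        using has_real_derivative_R[OF that(1)] by (rule has_field_derivative_at_within)
    qed (use that C in auto)
    moreover have "\<bar>deriv (R r) 0\<bar> \<le> C" by (rule C[OF that(1)]) simp
    then have "0 \<le> C" by (rule order_trans[OF abs_ge_zero])
    then have "C * \<bar>z\<bar> \<le> C * \<bar>Z\<bar>"
      using that by (intro mult_left_mono) auto
    ultimately show ?thesis using A[of r] by simp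
  qed
  moreover have "\<bar>deriv (R r) z\<bar> \<le> C" if "r \<ge> 1" "\<bar>z\<bar> \<le> Z" for r z
    using that by (intro C) auto
  ultimately show ?thesis by (intro exI[of _ "max C (A + C * \<bar>Z\<bar>)"]) force
qed

lemma loss_bounded:
  "\<exists>B. \<forall>\<theta>::('d,'h::finite) param. norm \<theta> \<le> \<rho> \<longrightarrow> (\<forall>y\<in>cube a b.
      (\<forall>r\<ge>1. norm (loss_grad f (R r) (deriv (R r)) \<theta> y) \<le> B \<and> (f y - realis (R r) \<theta> y)\<^sup>2 \<le> B) \<and>
      norm (loss_grad f relu (indicator {0<..}) \<theta> y) \<le> B \<and> (f y - realis relu \<theta> y)\<^sup>2 \<le> B)"
proof -
  define Y where "Y = \<bar>a\<bar> + \<bar>b\<bar>"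
  define Z where "Z = \<rho> + real CARD('d) * (\<rho> * Y)"
  obtain C where C: "\<And>r z. r \<ge> 1 \<Longrightarrow> \<bar>z\<bar> \<le> Z \<Longrightarrow> \<bar>R r z\<bar> \<le> C \<and> \<bar>deriv (R r) z\<bar> \<le> C"
    using R_bounded[of Z] by blast
  have "bounded (f ` cube a b)" by (intro compact_imp_bounded compact_continuous_image f_cont compact_cube)
  then obtain F where F: "\<And>y. y \<in> cube a b \<Longrightarrow> \<bar>f y\<bar> \<le> F" by (auto simp: bounded_iff)
  define C' where "C' = max C (\<bar>Z\<bar> + 1)"
  obtain B where B: "\<And>(\<theta>::('d,'h) param) y act act'. norm \<theta> \<le> \<rho> \<Longrightarrow> \<forall>j. \<bar>y $ j\<bar> \<le> Y \<Longrightarrow>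
      \<forall>i. \<bar>act (neuron_input \<theta> i y)\<bar> \<le> C' \<and> \<bar>act' (neuron_input \<theta> i y)\<bar> \<le> C' \<Longrightarrow> \<bar>f y\<bar> \<le> F \<Longrightarrow>
      norm (loss_grad f act act' \<theta> y) \<le> B \<and> (f y - realis act \<theta> y)\<^sup>2 \<le> B"
    using loss_bounds[where \<rho>=\<rho> and Y=Y and C=C' and f=f and F=F] by blast
  have "(\<forall>r\<ge>1. norm (loss_grad f (R r) (deriv (R r)) \<theta> y) \<le> B \<and> (f y - realis (R r) \<theta> y)\<^sup>2 \<le> B) \<and>
      norm (loss_grad f relu (indicator {0<..}) \<theta> y) \<le> B \<and> (f y - realis relu \<theta> y)\<^sup>2 \<le> B"
    if \<theta>: "norm \<theta> \<le> \<rho>" and y: "y \<in> cube a b" for \<theta> :: "('d,'h) param" and y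
  proof -
    have Y: "\<forall>j. \<bar>y $ j\<bar> \<le> Y" unfolding Y_def using abs_component_le_cube[OF y] by blast
    have input: "\<bar>neuron_input \<theta> i y\<bar> \<le> Z" for i
      unfolding Z_def Y_def using abs_neuron_input_le[OF \<theta> abs_component_le_cube[OF y]] .
    have "\<bar>R r (neuron_input \<theta> i y)\<bar> \<le> C' \<and> \<bar>deriv (R r) (neuron_input \<theta> i y)\<bar> \<le> C'" if "r \<ge> 1" for r i
      using C[OF that input[of i]] by (simp add: C'_def le_max_iff_disj)
    moreover have "\<bar>relu (neuron_input \<theta> i y)\<bar> \<le> C' \<and> \<bar>indicator {0<..} (neuron_input \<theta> i y)\<bar> \<le> C'" for i
      using input[of i] by (auto simp: C'_def relu_def indicator_def)
    ultimately show ?thesis using B[OF \<theta> Y _ F[OF y]] by blast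
  qed
  then show ?thesis by blast
qed

lemma continuous_on_loss_joint:
  assumes act: "continuous_on UNIV act" and act': "continuous_on UNIV act'"
  shows "continuous_on (UNIV \<times> cube a b) (\<lambda>p. loss_grad f act act' (fst p :: ('d,'h::finite) param) (snd p))"
    and "continuous_on (UNIV \<times> cube a b) (\<lambda>p. (f (snd p) - realis act (fst p :: ('d,'h) param) (snd p))\<^sup>2)"
proof -
  have f: "continuous_on (UNIV \<times> cube a b) (\<lambda>p. f (snd p))"
    by (rule continuous_on_compose2[OF f_cont continuous_on_snd]) auto
  have "continuous_on S (\<lambda>x. act (g x))" "continuous_on S (\<lambda>x. act' (g x))"
    if "continuous_on S g" for S and g :: "_ \<Rightarrow> real"
    using continuous_on_compose2[OF act that] continuous_on_compose2[OF act' that] by auto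
  note comp = this
  show "continuous_on (UNIV \<times> cube a b) (\<lambda>p. loss_grad f act act' (fst p :: ('d,'h) param) (snd p))"
    "continuous_on (UNIV \<times> cube a b) (\<lambda>p. (f (snd p) - realis act (fst p :: ('d,'h) param) (snd p))\<^sup>2)"
    unfolding loss_grad_def realis_eq realis_grad_def neuron_input_def wW_def bB_def vV_def cC_def
    by (intro continuous_intros f comp)+
qed

lemma loss_grad_uniform_in_param:
  fixes \<theta>0 :: "('d,'h::finite) param"
  assumes "r \<ge> 1" "\<epsilon> > 0"
  shows "\<exists>\<delta>>0. \<forall>\<theta>. dist \<theta> \<theta>0 < \<delta> \<longrightarrow> (\<forall>y\<in>space \<mu>.
    dist (loss_grad f (R r) (deriv (R r)) \<theta> y) (loss_grad f (R r) (deriv (R r)) \<theta>0 y) \<le> \<epsilon>)"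
proof -
  have "continuous_on (UNIV \<times> cube a b) (\<lambda>p. loss_grad f (R r) (deriv (R r)) (fst p :: ('d,'h) param) (snd p))"
    using continuous_on_loss_joint(1)[OF continuous_on_R R_C1[rule_format]] \<open>r \<ge> 1\<close> by blast
  from uniformly_continuous_in_parameter[OF this compact_cube \<open>\<epsilon> > 0\<close>, of \<theta>0]
  show ?thesis by (simp add: space_eq_cube)
qed

lemma integrable_smooth_loss:
  fixes \<theta> :: "('d,'h::finite) param"
  assumes "r \<ge> 1"
  shows "integrable \<mu> (loss_grad f (R r) (deriv (R r)) \<theta>)"
    and "integrable \<mu> (\<lambda>y. (f y - realis (R r) \<theta> y)\<^sup>2)"
proof -
  note joint = continuous_on_loss_joint[OF continuous_on_R[OF assms] R_C1[rule_format, OF assms]]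
  show "integrable \<mu> (loss_grad f (R r) (deriv (R r)) \<theta>)"
    by (rule integrable_continuous_on_cube[OF continuous_on_slice[OF joint(1)]])
  show "integrable \<mu> (\<lambda>y. (f y - realis (R r) \<theta> y)\<^sup>2)"
    using continuous_on_slice[where H="\<lambda>\<theta> y. (f y - realis (R r) \<theta> y)\<^sup>2", OF joint(2)]
    by (rule integrable_continuous_on_cube)
qed

lemma smooth_risk_has_derivative:
  fixes \<theta> :: "('d,'h::finite) param"
  assumes "r \<ge> 1"
  shows "(risk \<mu> f (R r) has_derivative (\<lambda>h. smooth_risk_grad r \<theta> \<bullet> h)) (at \<theta>)"
  unfolding risk_def[abs_def] risk_grad_def
  by (rule has_derivative_integral_uniform[OF has_derivative_squared_error[OF has_real_derivative_R[OF assms]]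
        integrable_smooth_loss(2)[OF assms] integrable_smooth_loss(1)[OF assms] loss_grad_uniform_in_param[OF assms]])

lemma isCont_smooth_risk_grad:
  fixes \<theta> :: "('d,'h::finite) param"
  assumes "r \<ge> 1"
  shows "isCont (smooth_risk_grad r) \<theta>"
  unfolding risk_grad_def[abs_def]
  by (rule isCont_integral_uniform[OF integrable_smooth_loss(1)[OF assms] loss_grad_uniform_in_param[OF assms]])

lemma tendsto_integral_dominated_cube:
  fixes u :: "nat \<Rightarrow> real^'d \<Rightarrow> 'b::{banach,second_countable_topology}"
  assumes cont: "\<And>r. r \<ge> 1 \<Longrightarrow> continuous_on (cube a b) (u r)"
    and lim: "\<And>y. y \<in> cube a b \<Longrightarrow> (\<lambda>r. u r y) \<longlonglongrightarrow> v y"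
    and bdd: "\<And>r y. r \<ge> 1 \<Longrightarrow> y \<in> cube a b \<Longrightarrow> norm (u r y) \<le> B"
  shows "integrable \<mu> v" "(\<lambda>r. \<integral>y. u r y \<partial>\<mu>) \<longlonglongrightarrow> (\<integral>y. v y \<partial>\<mu>)"
proof -
  have u_meas: "u (Suc r) \<in> borel_measurable \<mu>" for r by (intro measurable_continuous_on_cube cont) simp
  have lim': "\<And>y. y \<in> space \<mu> \<Longrightarrow> (\<lambda>r. u (Suc r) y) \<longlonglongrightarrow> v y"
    using lim by (auto simp: space_eq_cube intro: LIMSEQ_Suc)
  have v_meas: "v \<in> borel_measurable \<mu>" by (rule borel_measurable_LIMSEQ_metric[OF u_meas lim'])
  have AE_lim: "AE y in \<mu>. (\<lambda>r. u (Suc r) y) \<longlonglongrightarrow> v y" using lim' by blast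
  have AE_bdd: "AE y in \<mu>. norm (u (Suc r) y) \<le> B" for r using bdd by (intro AE_I2) (simp add: space_eq_cube)
  show "integrable \<mu> v"
    by (rule integrable_dominated_convergence[OF v_meas u_meas integrable_const AE_lim AE_bdd])
  have "(\<lambda>r. \<integral>y. u (Suc r) y \<partial>\<mu>) \<longlonglongrightarrow> (\<integral>y. v y \<partial>\<mu>)"
    by (rule integral_dominated_convergence[OF v_meas u_meas integrable_const AE_lim AE_bdd])
  then show "(\<lambda>r. \<integral>y. u r y \<partial>\<mu>) \<longlonglongrightarrow> (\<integral>y. v y \<partial>\<mu>)" by (rule LIMSEQ_imp_Suc)
qed

lemma smooth_risk_tendsto_relu:
  fixes \<theta> :: "('d,'h::finite) param"
  shows "integrable \<mu> (loss_grad f relu (indicator {0<..}) \<theta>)"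
    and "integrable \<mu> (\<lambda>y. (f y - realis relu \<theta> y)\<^sup>2)"
    and "(\<lambda>r. smooth_risk_grad r \<theta>) \<longlonglongrightarrow> relu_risk_grad \<theta>"
    and "(\<lambda>r. risk \<mu> f (R r) \<theta>) \<longlonglongrightarrow> risk \<mu> f relu \<theta>"
proof -
  obtain B where B: "\<And>y r. y \<in> cube a b \<Longrightarrow> r \<ge> 1 \<Longrightarrow>
      norm (loss_grad f (R r) (deriv (R r)) \<theta> y) \<le> B \<and> (f y - realis (R r) \<theta> y)\<^sup>2 \<le> B"
    using loss_bounded[of "norm \<theta>"] by blast
  have cont: "continuous_on (cube a b) (loss_grad f (R r) (deriv (R r)) \<theta>)"
    "continuous_on (cube a b) (\<lambda>y. (f y - realis (R r) \<theta> y)\<^sup>2)" if "r \<ge> 1" for r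
    using continuous_on_loss_joint[OF continuous_on_R[OF that] R_C1[rule_format, OF that]]
    by (auto intro: continuous_on_slice)
  have lim: "(\<lambda>r. loss_grad f (R r) (deriv (R r)) \<theta> y) \<longlonglongrightarrow> loss_grad f relu (indicator {0<..}) \<theta> y"
    "(\<lambda>r. (f y - realis (R r) \<theta> y)\<^sup>2) \<longlonglongrightarrow> (f y - realis relu \<theta> y)\<^sup>2" for y
    unfolding loss_grad_def realis_grad_def realis_eq by (intro tendsto_intros R_tendsto)+
  have "norm (loss_grad f (R r) (deriv (R r)) \<theta> y) \<le> B" "norm ((f y - realis (R r) \<theta> y)\<^sup>2) \<le> B"
    if "r \<ge> 1" "y \<in> cube a b" for r y
    using B[OF that(2,1)] by simp_all
  note grad = tendsto_integral_dominated_cube[OF cont(1) lim(1) this(1)]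
    and risk = tendsto_integral_dominated_cube[OF cont(2) lim(2) this(2)]
  show "integrable \<mu> (loss_grad f relu (indicator {0<..}) \<theta>)"
    "(\<lambda>r. smooth_risk_grad r \<theta>) \<longlonglongrightarrow> relu_risk_grad \<theta>"
    using grad unfolding risk_grad_def by auto
  show "integrable \<mu> (\<lambda>y. (f y - realis relu \<theta> y)\<^sup>2)"
    "(\<lambda>r. risk \<mu> f (R r) \<theta>) \<longlonglongrightarrow> risk \<mu> f relu \<theta>"
    using risk unfolding risk_def by auto
qed

lemma risk_relu_le:
  fixes \<theta> :: "('d,'h::finite) param"
  shows "risk \<mu> f relu \<theta> \<le> (\<integral>y. (f y - \<xi>)\<^sup>2 \<partial>\<mu>) + (norm \<theta> + \<bar>\<xi>\<bar>) * norm (relu_risk_grad \<theta>)"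
  by (rule risk_le_const_fit_plus_grad[OF smooth_risk_tendsto_relu(1,2)])
    (intro integrable_continuous_on_cube continuous_intros f_cont)

lemma risk_grads_bounded:
  "\<exists>B. \<forall>\<theta>::('d,'h::finite) param. norm \<theta> \<le> \<rho> \<longrightarrow>
    (\<forall>r\<ge>1. norm (smooth_risk_grad r \<theta>) \<le> B) \<and> norm (relu_risk_grad \<theta>) \<le> B"
proof -
  obtain B where B: "\<And>\<theta> y r. norm (\<theta>::('d,'h) param) \<le> \<rho> \<Longrightarrow> y \<in> space \<mu> \<Longrightarrow>
      (r \<ge> 1 \<longrightarrow> norm (loss_grad f (R r) (deriv (R r)) \<theta> y) \<le> B) \<and> norm (loss_grad f relu (indicator {0<..}) \<theta> y) \<le> B"
    using loss_bounded[of \<rho>] unfolding space_eq_cube by blast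
  have "norm (smooth_risk_grad r \<theta>) \<le> measure \<mu> (space \<mu>) * B"
    if "norm \<theta> \<le> \<rho>" "r \<ge> 1" for \<theta> :: "('d,'h) param" and r
    unfolding risk_grad_def using B[OF that(1)] that(2)
    by (intro norm_integral_le_measure_mult integrable_smooth_loss(1)) blast+
  moreover have "norm (relu_risk_grad \<theta>) \<le> measure \<mu> (space \<mu>) * B"
    if "norm \<theta> \<le> \<rho>" for \<theta> :: "('d,'h) param"
    unfolding risk_grad_def using B[OF that(1)]
    by (intro norm_integral_le_measure_mult smooth_risk_tendsto_relu(1)) blast+
  ultimately show ?thesis by blast
qed

lemma borel_measurable_relu_risk_grad: "(relu_risk_grad :: ('d,'h::finite) param \<Rightarrow> _) \<in> borel_measurable borel"
proof (rule borel_measurable_LIMSEQ_metric)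
  show "smooth_risk_grad (Suc r) \<in> borel_measurable borel" for r
    using isCont_smooth_risk_grad[of "Suc r"]
    by (intro borel_measurable_continuous_onI continuous_at_imp_continuous_on) auto
  show "(\<lambda>r. smooth_risk_grad (Suc r) \<theta>) \<longlonglongrightarrow> relu_risk_grad \<theta>" for \<theta> :: "('d,'h) param"
    by (rule LIMSEQ_Suc[OF smooth_risk_tendsto_relu(3)])
qed

lemma grad_smooth_risk_tendsto:
  fixes \<theta> :: "('d,'h::finite) param"
  shows "(\<lambda>r. grad (risk \<mu> f (R r)) \<theta>) \<longlonglongrightarrow> relu_risk_grad \<theta>"
proof (rule LIMSEQ_imp_Suc)
  have "grad (risk \<mu> f (R (Suc r))) \<theta> = smooth_risk_grad (Suc r) \<theta>" for r
    by (rule grad_eqI[OF smooth_risk_has_derivative]) simp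
  then show "(\<lambda>r. grad (risk \<mu> f (R (Suc r))) \<theta>) \<longlonglongrightarrow> relu_risk_grad \<theta>"
    using LIMSEQ_Suc[OF smooth_risk_tendsto_relu(3)] by simp
qed

lemma risk_grads_bounded_along_curve:
  fixes \<Theta> :: "real \<Rightarrow> ('d,'h::finite) param"
  assumes "continuous_on UNIV \<Theta>"
  shows "\<exists>B. \<forall>s\<in>{0..T}. (\<forall>r\<ge>1. norm (smooth_risk_grad r (\<Theta> s)) \<le> B) \<and> norm (relu_risk_grad (\<Theta> s)) \<le> B"
proof -
  have "compact (\<Theta> ` {0..T})"
    by (intro compact_continuous_image continuous_on_subset[OF assms]) auto
  then obtain \<rho> where "\<forall>\<theta>\<in>\<Theta> ` {0..T}. norm \<theta> \<le> \<rho>"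
    using compact_imp_bounded bounded_iff by metis
  moreover obtain B where "\<forall>\<theta>::('d,'h) param. norm \<theta> \<le> \<rho> \<longrightarrow>
      (\<forall>r\<ge>1. norm (smooth_risk_grad r \<theta>) \<le> B) \<and> norm (relu_risk_grad \<theta>) \<le> B"
    using risk_grads_bounded by blast
  ultimately show ?thesis by blast
qed

lemma relu_risk_grad_along_curve:
  fixes \<Theta> :: "real \<Rightarrow> ('d,'h::finite) param"
  assumes "continuous_on UNIV \<Theta>"
  shows "(\<lambda>s. relu_risk_grad (\<Theta> s)) \<in> borel_measurable borel"
    and "\<exists>B. \<forall>s\<in>{0..T}. norm (relu_risk_grad (\<Theta> s)) \<le> B"
  using measurable_compose[OF borel_measurable_continuous_onI[OF assms] borel_measurable_relu_risk_grad]
    risk_grads_bounded_along_curve[OF assms, of T] by blast+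

lemma smooth_risk_along_flow:
  fixes \<Theta> :: "real \<Rightarrow> ('d,'h::finite) param"
  assumes \<Theta>_cont: "continuous_on UNIV \<Theta>"
    and flow: "\<And>t. t \<ge> 0 \<Longrightarrow> \<Theta> t = \<Theta> 0 - (\<integral>s\<in>{0..t}. relu_risk_grad (\<Theta> s) \<partial>lborel)"
    and "r \<ge> 1" "t \<ge> 0"
  shows "risk \<mu> f (R r) (\<Theta> t)
    = risk \<mu> f (R r) (\<Theta> 0) - (\<integral>s\<in>{0..t}. smooth_risk_grad r (\<Theta> s) \<bullet> relu_risk_grad (\<Theta> s) \<partial>lborel)"
proof (rule integral_curve_chain_rule[OF smooth_risk_has_derivative[OF \<open>r \<ge> 1\<close>] _ \<Theta>_cont _ _ flow \<open>t \<ge> 0\<close>])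
  show "continuous_on UNIV (smooth_risk_grad r :: ('d,'h) param \<Rightarrow> _)"
    by (intro continuous_at_imp_continuous_on ballI isCont_smooth_risk_grad[OF \<open>r \<ge> 1\<close>])
qed (use relu_risk_grad_along_curve[OF \<Theta>_cont] in auto)

lemma smooth_dissipation_tendsto:
  fixes \<Theta> :: "real \<Rightarrow> ('d,'h::finite) param"
  assumes \<Theta>_cont: "continuous_on UNIV \<Theta>"
  shows "(\<lambda>r. \<integral>s\<in>{0..t}. smooth_risk_grad (Suc r) (\<Theta> s) \<bullet> relu_risk_grad (\<Theta> s) \<partial>lborel)
    \<longlonglongrightarrow> (\<integral>s\<in>{0..t}. (norm (relu_risk_grad (\<Theta> s)))\<^sup>2 \<partial>lborel)"
proof -
  obtain B where B: "\<And>s r. s \<in> {0..t} \<Longrightarrow> r \<ge> 1 \<Longrightarrow> norm (smooth_risk_grad r (\<Theta> s)) \<le> B"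
    "\<And>s. s \<in> {0..t} \<Longrightarrow> norm (relu_risk_grad (\<Theta> s)) \<le> B"
    using risk_grads_bounded_along_curve[OF \<Theta>_cont, of t] by blast
  show ?thesis
  proof (rule tendsto_set_integral_Icc_bounded[where B="B * B"])
    have \<Theta>_meas: "\<Theta> \<in> borel_measurable borel" by (rule borel_measurable_continuous_onI[OF \<Theta>_cont])
    have relu_meas: "(\<lambda>s. relu_risk_grad (\<Theta> s)) \<in> borel_measurable borel"
      by (rule relu_risk_grad_along_curve(1)[OF \<Theta>_cont])
    have "(\<lambda>s. smooth_risk_grad (Suc r) (\<Theta> s)) \<in> borel_measurable borel" for r
      using isCont_smooth_risk_grad[of "Suc r"]
      by (intro measurable_compose[OF \<Theta>_meas] borel_measurable_continuous_onI continuous_at_imp_continuous_on) auto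
    then show "(\<lambda>s. smooth_risk_grad (Suc r) (\<Theta> s) \<bullet> relu_risk_grad (\<Theta> s)) \<in> borel_measurable borel" for r
      using relu_meas by (rule borel_measurable_inner)
    show "(\<lambda>s. (norm (relu_risk_grad (\<Theta> s)))\<^sup>2) \<in> borel_measurable borel"
      using relu_meas by measurable
    show "(\<lambda>r. smooth_risk_grad (Suc r) (\<Theta> s) \<bullet> relu_risk_grad (\<Theta> s)) \<longlonglongrightarrow> (norm (relu_risk_grad (\<Theta> s)))\<^sup>2" for s
      unfolding power2_norm_eq_inner by (intro tendsto_inner tendsto_const LIMSEQ_Suc[OF smooth_risk_tendsto_relu(3)])
    show "\<bar>smooth_risk_grad (Suc r) (\<Theta> s) \<bullet> relu_risk_grad (\<Theta> s)\<bar> \<le> B * B" if "s \<in> {0..t}" for r s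
    proof -
      have "\<bar>smooth_risk_grad (Suc r) (\<Theta> s) \<bullet> relu_risk_grad (\<Theta> s)\<bar>
          \<le> norm (smooth_risk_grad (Suc r) (\<Theta> s)) * norm (relu_risk_grad (\<Theta> s))"
        by (rule Cauchy_Schwarz_ineq2)
      also have "\<dots> \<le> B * B"
        using B(1)[OF that, of "Suc r"] B(2)[OF that] by (intro mult_mono) (auto intro: order_trans[OF norm_ge_zero])
      finally show ?thesis .
    qed
  qed
qed

lemma relu_risk_energy_identity:
  fixes \<Theta> :: "real \<Rightarrow> ('d,'h::finite) param"
  assumes \<Theta>_cont: "continuous_on UNIV \<Theta>"
    and flow: "\<And>t. t \<ge> 0 \<Longrightarrow> \<Theta> t = \<Theta> 0 - (\<integral>s\<in>{0..t}. relu_risk_grad (\<Theta> s) \<partial>lborel)"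
    and "t \<ge> 0"
  shows "risk \<mu> f relu (\<Theta> t) = risk \<mu> f relu (\<Theta> 0) - (\<integral>s\<in>{0..t}. (norm (relu_risk_grad (\<Theta> s)))\<^sup>2 \<partial>lborel)"
proof -
  have "(\<lambda>r. risk \<mu> f (R (Suc r)) (\<Theta> 0)
      - (\<integral>s\<in>{0..t}. smooth_risk_grad (Suc r) (\<Theta> s) \<bullet> relu_risk_grad (\<Theta> s) \<partial>lborel))
    \<longlonglongrightarrow> risk \<mu> f relu (\<Theta> 0) - (\<integral>s\<in>{0..t}. (norm (relu_risk_grad (\<Theta> s)))\<^sup>2 \<partial>lborel)"
    by (intro tendsto_diff LIMSEQ_Suc[OF smooth_risk_tendsto_relu(4)] smooth_dissipation_tendsto[OF \<Theta>_cont])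
  moreover have "(\<lambda>r. risk \<mu> f (R (Suc r)) (\<Theta> t)) \<longlonglongrightarrow> risk \<mu> f relu (\<Theta> t)"
    by (rule LIMSEQ_Suc[OF smooth_risk_tendsto_relu(4)])
  ultimately show ?thesis
    using smooth_risk_along_flow[OF \<Theta>_cont flow _ \<open>t \<ge> 0\<close>] by (simp add: LIMSEQ_unique)
qed

end

section \<open>Energy dissipation along the flow\<close>

(* With \<sigma> = sqrt (t + 1), the pointwise AM-GM bound |g| \<le> \<sigma>/2 |g|^2 + 1/(2 \<sigma>) turns the
   energy bound into growth of order sqrt t. *)
lemma flow_norm_le_sqrt:
  fixes Th g :: "real \<Rightarrow> 'p::euclidean_space"
  assumes g_meas: "g \<in> borel_measurable borel" and g_bdd: "\<And>T. \<exists>B. \<forall>s\<in>{0..T}. norm (g s) \<le> B"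
    and flow: "\<And>t. t \<ge> 0 \<Longrightarrow> Th t = Th 0 - (\<integral>s\<in>{0..t}. g s \<partial>lborel)"
    and energy: "\<And>t. t \<ge> 0 \<Longrightarrow> (\<integral>s\<in>{0..t}. (norm (g s))\<^sup>2 \<partial>lborel) \<le> E"
    and "t \<ge> 0"
  shows "norm (Th t) \<le> norm (Th 0) + (E + 1) / 2 * sqrt (t + 1)"
proof -
  define \<sigma> where "\<sigma> = sqrt (t + 1)"
  have "\<sigma> \<ge> 1" "\<sigma> * \<sigma> = t + 1" using \<open>t \<ge> 0\<close> by (simp_all add: \<sigma>_def)
  have sq_int: "set_integrable lborel {0..t} (\<lambda>s. (norm (g s))\<^sup>2)"
    using g_meas locally_bounded_norm_power2[OF g_bdd] by (intro set_integrable_Icc_locally_bounded) auto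
  have one_int: "set_integrable lborel {0..t} (\<lambda>_. 1 :: real)"
    by (rule set_integrable_Icc_bounded[where B=1]) auto
  have "norm (Th t) \<le> norm (Th 0) + norm (\<integral>s\<in>{0..t}. g s \<partial>lborel)"
    unfolding flow[OF \<open>t \<ge> 0\<close>] by (rule norm_triangle_ineq4)
  also have "norm (\<integral>s\<in>{0..t}. g s \<partial>lborel) \<le> (\<integral>s\<in>{0..t}. norm (g s) \<partial>lborel)"
    using g_meas g_bdd by (intro set_integral_norm_bound set_integrable_Icc_locally_bounded)
  also have "\<dots> \<le> (\<integral>s\<in>{0..t}. \<sigma> / 2 * (norm (g s))\<^sup>2 + 1 / (2 * \<sigma>) * 1 \<partial>lborel)"
  proof (rule set_integral_mono)
    show "set_integrable lborel {0..t} (\<lambda>s. norm (g s))"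
      using g_meas g_bdd by (intro set_integrable_Icc_locally_bounded) auto
    show "set_integrable lborel {0..t} (\<lambda>s. \<sigma> / 2 * (norm (g s))\<^sup>2 + 1 / (2 * \<sigma>) * 1)"
      using sq_int one_int by (intro set_integral_add set_integrable_mult_right)
    fix s
    have "2 * \<sigma> * norm (g s) \<le> \<sigma>\<^sup>2 * (norm (g s))\<^sup>2 + 1"
      using zero_le_power2[of "\<sigma> * norm (g s) - 1"] by (simp add: power2_eq_square algebra_simps)
    then show "norm (g s) \<le> \<sigma> / 2 * (norm (g s))\<^sup>2 + 1 / (2 * \<sigma>) * 1"
      using \<open>\<sigma> \<ge> 1\<close> by (simp add: field_simps power2_eq_square)
  qed
  also have "\<dots> = \<sigma> / 2 * (\<integral>s\<in>{0..t}. (norm (g s))\<^sup>2 \<partial>lborel) + 1 / (2 * \<sigma>) * t"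
    using sq_int one_int \<open>t \<ge> 0\<close> by (simp add: set_integral_const measure_lborel_Icc)
  also have "\<dots> \<le> \<sigma> / 2 * E + \<sigma> / 2"
    using energy[OF \<open>t \<ge> 0\<close>] \<open>\<sigma> \<ge> 1\<close> \<open>\<sigma> * \<sigma> = t + 1\<close>
    by (intro add_mono mult_left_mono) (auto simp: field_simps)
  finally show ?thesis by (simp add: \<sigma>_def field_simps)
qed

lemma set_integral_unbounded_if_ge_inverse:
  fixes \<phi> :: "real \<Rightarrow> real"
  assumes "\<kappa> > 0" and lower: "\<And>s. s \<ge> 0 \<Longrightarrow> \<kappa> / (s + 1) \<le> \<phi> s"
    and int: "\<And>T. set_integrable lborel {0..T} \<phi>"
  obtains T where "T \<ge> 0" "(\<integral>s\<in>{0..T}. \<phi> s \<partial>lborel) > E"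
proof -
  define T where "T = exp ((\<bar>E\<bar> + 1) / \<kappa>) - 1"
  have "T \<ge> 0" using \<open>\<kappa> > 0\<close> by (simp add: T_def)
  have "(\<integral>s\<in>{0..T}. \<kappa> / (s + 1) \<partial>lborel) = \<kappa> * ln (T + 1) - \<kappa> * ln (0 + 1)"
    unfolding set_lebesgue_integral_def
  proof (rule integral_FTC_atLeastAtMost[OF \<open>T \<ge> 0\<close>])
    show "((\<lambda>s. \<kappa> * ln (s + 1)) has_vector_derivative \<kappa> / (x + 1)) (at x within {0..T})"
      if "0 \<le> x" "x \<le> T" for x
      using that by (auto intro!: derivative_eq_intros simp: has_real_derivative_iff_has_vector_derivative[symmetric])
    show "continuous_on {0..T} (\<lambda>s. \<kappa> / (s + 1))" by (intro continuous_intros) auto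
  qed
  also have "\<dots> = \<bar>E\<bar> + 1" using \<open>\<kappa> > 0\<close> by (simp add: T_def)
  finally have "(\<integral>s\<in>{0..T}. \<kappa> / (s + 1) \<partial>lborel) > E" by linarith
  also have "(\<integral>s\<in>{0..T}. \<kappa> / (s + 1) \<partial>lborel) \<le> (\<integral>s\<in>{0..T}. \<phi> s \<partial>lborel)"
  proof (rule set_integral_mono[OF _ int])
    show "set_integrable lborel {0..T} (\<lambda>s. \<kappa> / (s + 1))"
      by (rule set_integrable_Icc_bounded[where B=\<kappa>]) (use \<open>\<kappa> > 0\<close> in \<open>auto simp: field_simps\<close>)
  qed (use lower in auto)
  finally show ?thesis using \<open>T \<ge> 0\<close> that by blast
qed

lemma exists_time_small_gradient:
  fixes Th g :: "real \<Rightarrow> 'p::euclidean_space"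
  assumes g_meas: "g \<in> borel_measurable borel" and g_bdd: "\<And>T. \<exists>B. \<forall>s\<in>{0..T}. norm (g s) \<le> B"
    and flow: "\<And>t. t \<ge> 0 \<Longrightarrow> Th t = Th 0 - (\<integral>s\<in>{0..t}. g s \<partial>lborel)"
    and energy: "\<And>t. t \<ge> 0 \<Longrightarrow> (\<integral>s\<in>{0..t}. (norm (g s))\<^sup>2 \<partial>lborel) \<le> E"
    and "\<epsilon> > 0"
  obtains t where "t \<ge> 0" "(norm (Th t) + \<bar>\<xi>\<bar>) * norm (g t) \<le> \<epsilon>"
proof (rule ccontr)
  assume "\<not> thesis"
  with that have big: "\<epsilon> < (norm (Th t) + \<bar>\<xi>\<bar>) * norm (g t)" if "t \<ge> 0" for t
    using \<open>t \<ge> 0\<close> by force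
  have "0 \<le> (\<integral>s\<in>{0..0}. (norm (g s))\<^sup>2 \<partial>lborel)"
    unfolding set_lebesgue_integral_def by (intro integral_nonneg_AE) auto
  then have "E \<ge> 0" using energy[of 0] by linarith
  define D where "D = norm (Th 0) + \<bar>\<xi>\<bar> + (E + 1) / 2"
  have "D > 0" using \<open>E \<ge> 0\<close> by (simp add: D_def add_nonneg_pos)
  have lower: "\<epsilon>\<^sup>2 / D\<^sup>2 / (t + 1) \<le> (norm (g t))\<^sup>2" if "t \<ge> 0" for t
  proof -
    have "norm (Th t) + \<bar>\<xi>\<bar> \<le> D * sqrt (t + 1)"
      using flow_norm_le_sqrt[OF g_meas g_bdd flow energy that] \<open>E \<ge> 0\<close> \<open>t \<ge> 0\<close>
        mult_right_mono[of 1 "sqrt (t + 1)" "norm (Th 0) + \<bar>\<xi>\<bar>"]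
      by (simp add: D_def algebra_simps)
    then have "\<epsilon> < D * sqrt (t + 1) * norm (g t)"
      using big[OF that] by (smt (verit) mult_right_mono norm_ge_zero)
    then have "\<epsilon>\<^sup>2 \<le> D\<^sup>2 * (t + 1) * (norm (g t))\<^sup>2"
      using \<open>\<epsilon> > 0\<close> \<open>t \<ge> 0\<close> power_mono[of \<epsilon> "D * sqrt (t + 1) * norm (g t)" 2]
      by (simp add: power_mult_distrib)
    moreover have "D\<^sup>2 * (t + 1) > 0" using \<open>D > 0\<close> \<open>t \<ge> 0\<close> by simp
    ultimately have "\<epsilon>\<^sup>2 / (D\<^sup>2 * (t + 1)) \<le> (norm (g t))\<^sup>2" by (simp add: pos_divide_le_eq ac_simps)
    then show ?thesis by (simp add: divide_divide_eq_left)
  qed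
  have "\<epsilon>\<^sup>2 / D\<^sup>2 > 0" using \<open>\<epsilon> > 0\<close> \<open>D > 0\<close> by simp
  moreover have "set_integrable lborel {0..T} (\<lambda>s. (norm (g s))\<^sup>2)" for T
    using g_meas locally_bounded_norm_power2[OF g_bdd] by (intro set_integrable_Icc_locally_bounded) auto
  ultimately obtain T where "T \<ge> 0" "(\<integral>s\<in>{0..T}. (norm (g s))\<^sup>2 \<partial>lborel) > E"
    using set_integral_unbounded_if_ge_inverse[where \<phi>="\<lambda>s. (norm (g s))\<^sup>2" and E=E] lower by blast
  then show False using energy[of T] by simp
qed

lemma Limsup_le_of_energy_dissipation:
  fixes L :: "real \<Rightarrow> real" and Th g :: "real \<Rightarrow> 'p::euclidean_space" and q :: "real \<Rightarrow> real"
  assumes g_meas: "g \<in> borel_measurable borel" and g_bdd: "\<And>T. \<exists>B. \<forall>s\<in>{0..T}. norm (g s) \<le> B"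
    and flow: "\<And>t. t \<ge> 0 \<Longrightarrow> Th t = Th 0 - (\<integral>s\<in>{0..t}. g s \<partial>lborel)"
    and energy: "\<And>t. t \<ge> 0 \<Longrightarrow> L t = L 0 - (\<integral>s\<in>{0..t}. (norm (g s))\<^sup>2 \<partial>lborel)"
    and L_nonneg: "\<And>t. t \<ge> 0 \<Longrightarrow> L t \<ge> 0"
    and L_le: "\<And>t \<xi>. t \<ge> 0 \<Longrightarrow> L t \<le> q \<xi> + (norm (Th t) + \<bar>\<xi>\<bar>) * norm (g t)"
    and q_nonneg: "\<And>\<xi>. q \<xi> \<ge> 0"
  shows "Limsup at_top (\<lambda>t. ereal (L t)) \<le> ereal (INF \<xi>. q \<xi>)"
proof (rule ereal_le_epsilon2)
  have sq_int: "set_integrable lborel {0..t} (\<lambda>s. (norm (g s))\<^sup>2)" for t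
    using g_meas locally_bounded_norm_power2[OF g_bdd] by (intro set_integrable_Icc_locally_bounded) auto
  have L_antimono: "L t2 \<le> L t1" if "0 \<le> t1" "t1 \<le> t2" for t1 t2
  proof -
    have "(\<integral>s\<in>{0..t1}. (norm (g s))\<^sup>2 \<partial>lborel) \<le> (\<integral>s\<in>{0..t2}. (norm (g s))\<^sup>2 \<partial>lborel)"
      using sq_int that unfolding set_lebesgue_integral_def set_integrable_def
      by (intro integral_mono) (auto simp: indicator_def)
    then show ?thesis using energy[of t1] energy[of t2] that by simp
  qed
  fix e :: real assume "e > 0"
  have "bdd_below (range q)" using q_nonneg by (intro bdd_belowI2[where m=0])
  moreover have "(INF \<xi>. q \<xi>) < (INF \<xi>. q \<xi>) + e / 2" using \<open>e > 0\<close> by simp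
  ultimately obtain \<xi> where \<xi>: "q \<xi> < (INF \<xi>. q \<xi>) + e / 2"
    using cINF_less_iff by blast
  obtain t0 where "t0 \<ge> 0" "(norm (Th t0) + \<bar>\<xi>\<bar>) * norm (g t0) \<le> e / 2"
    using exists_time_small_gradient[OF g_meas g_bdd flow, of "L 0"] energy L_nonneg \<open>e > 0\<close>
    by (metis diff_ge_0_iff_ge half_gt_zero)
  then have "L t \<le> q \<xi> + e / 2" if "t \<ge> t0" for t
    using L_antimono[OF \<open>t0 \<ge> 0\<close> that] L_le[OF \<open>t0 \<ge> 0\<close>, of \<xi>] by linarith
  then have "Limsup at_top (\<lambda>t. ereal (L t)) \<le> ereal (q \<xi> + e / 2)"
    by (intro Limsup_bounded) (auto simp: eventually_at_top_linorder)
  also have "\<dots> \<le> ereal (INF \<xi>. q \<xi>) + ereal e" using \<xi> \<open>e > 0\<close> by simp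
  finally show "Limsup at_top (\<lambda>t. ereal (L t)) \<le> ereal (INF \<xi>. q \<xi>) + ereal e" .
qed

context relu_smoothing
begin

lemma Limsup_relu_risk_le:
  fixes \<Theta> :: "real \<Rightarrow> ('d,'h::finite) param"
  assumes \<Theta>_cont: "continuous_on {0..} \<Theta>"
    and \<Theta>_flow: "\<And>t. t \<ge> 0 \<Longrightarrow> \<Theta> t = \<Theta> 0 - (\<integral>s\<in>{0..t}. relu_risk_grad (\<Theta> s) \<partial>lborel)"
  shows "Limsup at_top (\<lambda>t. ereal (risk \<mu> f relu (\<Theta> t))) \<le> ereal (INF \<xi>. (\<integral>x. (f x - \<xi>)\<^sup>2 \<partial>\<mu>))"
proof -
  define \<Theta>' where "\<Theta>' s = \<Theta> (max 0 s)" for s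
  have \<Theta>'_eq: "\<Theta>' t = \<Theta> t" if "t \<ge> 0" for t using that by (simp add: \<Theta>'_def)
  have \<Theta>'_cont: "continuous_on UNIV \<Theta>'"
    unfolding \<Theta>'_def by (rule continuous_on_compose2[OF \<Theta>_cont]) (auto intro!: continuous_intros)
  have flow: "\<Theta>' t = \<Theta>' 0 - (\<integral>s\<in>{0..t}. relu_risk_grad (\<Theta>' s) \<partial>lborel)" if "t \<ge> 0" for t
  proof -
    have "(\<integral>s\<in>{0..t}. relu_risk_grad (\<Theta> s) \<partial>lborel) = (\<integral>s\<in>{0..t}. relu_risk_grad (\<Theta>' s) \<partial>lborel)"
      by (rule set_lebesgue_integral_cong) (auto simp: \<Theta>'_eq)
    then show ?thesis using \<Theta>_flow[OF that] that by (simp add: \<Theta>'_eq)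
  qed
  show ?thesis
  proof (rule Limsup_le_of_energy_dissipation[OF relu_risk_grad_along_curve[OF \<Theta>'_cont] flow])
    show "risk \<mu> f relu (\<Theta> t) = risk \<mu> f relu (\<Theta> 0) - (\<integral>s\<in>{0..t}. (norm (relu_risk_grad (\<Theta>' s)))\<^sup>2 \<partial>lborel)"
      if "t \<ge> 0" for t
      using relu_risk_energy_identity[OF \<Theta>'_cont flow that] that by (simp add: \<Theta>'_eq)
    show "risk \<mu> f relu (\<Theta> t) \<le> (\<integral>x. (f x - \<xi>)\<^sup>2 \<partial>\<mu>) + (norm (\<Theta>' t) + \<bar>\<xi>\<bar>) * norm (relu_risk_grad (\<Theta>' t))"
      if "t \<ge> 0" for t \<xi>
      using risk_relu_le[of "\<Theta> t" \<xi>] that by (simp add: \<Theta>'_eq)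
  qed (auto simp: risk_def)
qed

end

theorem corollary4p2:
  fixes a b :: real
    and f :: "real^'d::finite \<Rightarrow> real"
    and R :: "nat \<Rightarrow> real \<Rightarrow> real"
    and \<mu> :: "(real^'d) measure"
    and G :: "('d,'h::finite) param \<Rightarrow> ('d,'h) param"
    and \<Theta> :: "real \<Rightarrow> ('d,'h) param"
  assumes ab: "a < b"
    and f_cont: "continuous_on (cube a b) f"
    and R_diff: "\<forall>r\<ge>1. \<forall>x. R r differentiable (at x)"
    and R_C1: "\<forall>r\<ge>1. continuous_on UNIV (deriv (R r))"
    and R_lim: "\<forall>x. (\<lambda>r. \<bar>R r x - relu x\<bar> + \<bar>deriv (R r) x - indicator {0<..} x\<bar>) \<longlonglongrightarrow> 0"
    and R_bd: "\<forall>x. \<exists>C. \<forall>r\<ge>1. \<forall>y\<in>{-\<bar>x\<bar>..\<bar>x\<bar>}. \<bar>deriv (R r) y\<bar> \<le> C"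
    and mu_sets: "sets \<mu> = sets (restrict_space borel (cube a b))"
    and mu_fin: "finite_measure \<mu>"
    and G_lim: "\<forall>\<theta> l. (\<lambda>r. grad (risk \<mu> f (R r)) \<theta>) \<longlonglongrightarrow> l \<longrightarrow> G \<theta> = l"
    and G_meas: "G \<in> borel_measurable borel"
    and G_locbd: "\<forall>K. compact K \<longrightarrow> bounded (G ` K)"
    and Theta_cont: "continuous_on {0..} \<Theta>"
    and Theta_flow: "\<forall>t\<ge>0. \<Theta> t = \<Theta> 0 - (\<integral>s\<in>{0..t}. G (\<Theta> s) \<partial>lborel)"
  shows "Limsup at_top (\<lambda>t. ereal (risk \<mu> f relu (\<Theta> t)))
           \<le> ereal (INF \<xi>. (\<integral>x. (f x - \<xi>)\<^sup>2 \<partial>\<mu>))"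
proof -
  interpret relu_smoothing \<mu> a b f R
    by (intro relu_smoothing.intro relu_smoothing_axioms.intro) (fact mu_fin f_cont R_diff R_C1 R_lim R_bd mu_sets)+
  have G_eq: "G = relu_risk_grad"
    by (rule ext) (use G_lim grad_smooth_risk_tendsto in blast)
  show ?thesis
    by (rule Limsup_relu_risk_le[OF Theta_cont]) (use Theta_flow[unfolded G_eq] in blast)
qed

end
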